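(* Let $r\ge1$ and consider the linear program $\mathrm{LP}_r$ over $\mathbb K$ described in the context. For every $\lambda\in\mathbb R$, let $\boldsymbol\mu=t^\lambda$. Then the valuation of the primal part $(\mathbf u,\mathbf v,\mathbf z,\mathbf z',\mathbf h)$ of the point with parameter $\boldsymbol\mu$ of the Hardy central path of $\mathrm{LP}_r$ equals $(u(\lambda),v(\lambda),z(\lambda),z'(\lambda),h(\lambda))$. These are given by: $u_0(\lambda)=1$, $v_0(\lambda)=\min(2,\lambda)$; $(u_i(\lambda),v_i(\lambda))=\big(1+\min(u_{i-1}(\lambda),v_{i-1}(\lambda)),\,1-2^{-i}+\max(u_{i-1}(\lambda),v_{i-1}(\lambda))\big)$ for $1\le i\le r$; $z_0(\lambda)=1$, $h_0(\lambda)=2$; and $z_i(\lambda)=1+u_{i-1}(\lambda)$, $z'_i(\lambda)=1+v_{i-1}(\lambda)$, $h_i(\lambda)=v_i(\lambda)$ for $1\le i\le r$.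
   Context: $\mathbb K$ is the real closed field of germs at $+\infty$ of real functions definable in $\bar{\mathbb R}^{\mathbb R}$, the ordered real field expanded by the power functions $t\mapsto t^r$. It contains the germs $t^\alpha$. $\mathrm{val}(\mathbf f)=\lim_{t\to\infty}\log|\mathbf f(t)|/\log t$, applied entrywise. $\mathrm{LP}_r$ has decision variables $\mathbf x=(\mathbf u_0,\mathbf v_0,\dots,\mathbf u_r,\mathbf v_r)$ and slack variables $\mathbf w=(\mathbf z_0,\mathbf h_0,\mathbf z_1,\mathbf z'_1,\mathbf h_1,\dots,\mathbf z_r,\mathbf z'_r,\mathbf h_r)$, all required to be $\ge0$. The problem is: minimize $\mathbf v_0$ subject to - $\mathbf u_0+\mathbf z_0=t$ and $\mathbf v_0+\mathbf h_0=t^2$; - for $1\le i\le r$: $\mathbf u_i+\mathbf z_i=t\mathbf u_{i-1}$, $\mathbf u_i+\mathbf z'_i=t\mathbf v_{i-1}$, and $\mathbf v_i+\mathbf h_i=t^{1-2^{-i}}(\mathbf u_{i-1}+\mathbf v_{i-1})$. This is of the form: minimize $\mathbf c^T\mathbf x$ subject to $\mathbf A\mathbf x+\mathbf w=\mathbf b$, $\mathbf x,\mathbf w\ge0$, with $\mathbf c=e_{\mathbf v_0}$. It is strictly feasible and has bounded feasible set. For each positive $\boldsymbol\mu\in\mathbb K$, its Hardy central path point is the unique solution $(\mathbf x,\mathbf w,\mathbf y,\mathbf s)$ over $\mathbb K$ of $\mathbf A\mathbf x+\mathbf w=\mathbf b$, $-\mathbf A^T\mathbf y+\mathbf s=\mathbf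 c$, $\mathbf w_i\mathbf y_i=\mathbf x_j\mathbf s_j=\boldsymbol\mu$ for all $i,j$, $\mathbf x,\mathbf w,\mathbf y,\mathbf s>0$. Its primal part is $(\mathbf x,\mathbf w)$. *)

theory Defs
  imports Complex_Main
begin

definition coef :: "real \<Rightarrow> nat \<Rightarrow> real" where
  "coef t i = t powr (1 - 1 / 2 ^ i)"

text \<open>Central path system of LP_r, instantiated at a real value t of the germ variable,
  with barrier parameter mu.  Primal: u, v (decision), z, z', h (slacks), indexed by
  0..r (z' only 1..r).  Dual: ya (rows u_i + z_i = ..; ya 0 is the row u_0 + z_0 = t),
  ya' (rows u_i + z'_i = .., i = 1..r), yb (rows v_i + h_i = ..; yb 0 is the row v_0 + h_0 = t^2),
  su, sv (dual slacks of u, v).  Dual equation: -A^T y + s = c, i.e. s = c + A^T y,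
  with c = e_(v_0).\<close>
definition cp_system ::
  "nat \<Rightarrow> real \<Rightarrow> real \<Rightarrow>
   (nat \<Rightarrow> real) \<Rightarrow> (nat \<Rightarrow> real) \<Rightarrow> (nat \<Rightarrow> real) \<Rightarrow> (nat \<Rightarrow> real) \<Rightarrow> (nat \<Rightarrow> real) \<Rightarrow>
   (nat \<Rightarrow> real) \<Rightarrow> (nat \<Rightarrow> real) \<Rightarrow> (nat \<Rightarrow> real) \<Rightarrow> (nat \<Rightarrow> real) \<Rightarrow> (nat \<Rightarrow> real) \<Rightarrow> bool"
where
  "cp_system r t mu u v z z' h ya ya' yb su sv \<longleftrightarrow>
     \<comment> \<open>primal equations\<close>
     u 0 + z 0 = t \<and> v 0 + h 0 = t ^ 2 \<and>
     (\<forall>i\<in>{1..r}. u i + z i = t * u (i - 1) \<and> u i + z' i = t * v (i - 1) \<and>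
                   v i + h i = coef t i * (u (i - 1) + v (i - 1))) \<and>
     \<comment> \<open>dual equations s = c + A^T y\<close>
     (\<forall>i\<in>{0..r}.
        su i = (if i = 0 then ya 0 else ya i + ya' i)
               - (if i < r then t * ya (i + 1) + coef t (i + 1) * yb (i + 1) else 0) \<and>
        sv i = (if i = 0 then 1 else 0) + yb i
               - (if i < r then t * ya' (i + 1) + coef t (i + 1) * yb (i + 1) else 0)) \<and>
     \<comment> \<open>centrality\<close>
     (\<forall>i\<in>{0..r}. z i * ya i = mu \<and> h i * yb i = mu \<and> u i * su i = mu \<and> v i * sv i = mu) \<and>
     (\<forall>i\<in>{1..r}. z' i * ya' i = mu) \<and>
     \<comment> \<open>positivity\<close>
     (\<forall>i\<in>{0..r}. u i > 0 \<and> v i > 0 \<and> z i > 0 \<and> h i > 0 \<and>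
                   ya i > 0 \<and> yb i > 0 \<and> su i > 0 \<and> sv i > 0) \<and>
     (\<forall>i\<in>{1..r}. z' i > 0 \<and> ya' i > 0)"

definition cp_primal ::
  "nat \<Rightarrow> real \<Rightarrow> real \<Rightarrow>
   (nat \<Rightarrow> real) \<Rightarrow> (nat \<Rightarrow> real) \<Rightarrow> (nat \<Rightarrow> real) \<Rightarrow> (nat \<Rightarrow> real) \<Rightarrow> (nat \<Rightarrow> real) \<Rightarrow> bool"
where
  "cp_primal r t mu u v z z' h \<longleftrightarrow>
     (\<exists>ya ya' yb su sv. cp_system r t mu u v z z' h ya ya' yb su sv)"

definition has_val :: "(real \<Rightarrow> real) \<Rightarrow> real \<Rightarrow> bool" where
  "has_val f a \<longleftrightarrow> ((\<lambda>t. ln \<bar>f t\<bar> / ln t) \<longlongrightarrow> a) at_top"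

fun uv_trop :: "real \<Rightarrow> nat \<Rightarrow> real \<times> real" where
  "uv_trop l 0 = (1, min 2 l)"
| "uv_trop l (Suc i) =
     (1 + min (fst (uv_trop l i)) (snd (uv_trop l i)),
      1 - 1 / 2 ^ Suc i + max (fst (uv_trop l i)) (snd (uv_trop l i)))"

definition u_trop :: "real \<Rightarrow> nat \<Rightarrow> real" where "u_trop l i = fst (uv_trop l i)"
definition v_trop :: "real \<Rightarrow> nat \<Rightarrow> real" where "v_trop l i = snd (uv_trop l i)"
definition z_trop :: "real \<Rightarrow> nat \<Rightarrow> real" where
  "z_trop l i = (if i = 0 then 1 else 1 + u_trop l (i - 1))"
definition z'_trop :: "real \<Rightarrow> nat \<Rightarrow> real" where
  "z'_trop l i = 1 + v_trop l (i - 1)"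
definition h_trop :: "real \<Rightarrow> nat \<Rightarrow> real" where
  "h_trop l i = (if i = 0 then 2 else v_trop l i)"

end

theory Submission
  imports Defs "HOL-Analysis.Analysis"
begin

(* Fix t >= 1 (a real value of the germ variable) and mu > 0.  A primal point is determined
   by (u, v): the slacks z, z', h are the affine functions slack_z, slack_z', slack_h of (u, v).

   If (x, w, y, s) solves the central path system, then for every
      primal (u', v') the sum of mu * x'_j / x_j over all 5r + 4 primal coordinates equals
      v'_0 + t * y_{z_0} + t^2 * y_{h_0}.  For (u', v') = (u, v) this is (5r + 4) * mu, and
      adding the identity for two central points gives a sum of terms a/b + b/a - 2 >= 0 that
      vanishes; hence the primal part is unique.
   2. Existence.  The barrier v_0 / mu - (sum of the logarithms of all coordinates) tends to
      +infinity at the boundary of the bounded strictly feasible set, so it attains its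
      minimum; the stationarity conditions are the dual equations with y = mu / w, s = mu / x.
   3. Bounds.  Every coordinate of the central point lies between c * G and N * G, where c, N
      depend only on r and the "scale" G is the multiplicative form of the tropical recursion
      (G_{u_i} = t * min(G_{u_{i-1}}, G_{v_{i-1}}), G_{v_i} = t^(1-2^-i) * (G_{u_{i-1}} + G_{v_{i-1}})).
      The upper bounds come from feasibility and v_0 <= N * mu, the lower ones from the
      duality identity applied to the strictly feasible point G / 2^(i+1).
   4. Valuations.  has_val is compatible with products, min, sums (giving max) and two-sided
      multiplicative bounds; so the scales have the tropical valuations, and so does the
      central path. *)

definition slack_z :: "real \<Rightarrow> (nat \<Rightarrow> real) \<Rightarrow> nat \<Rightarrow> real" where
  "slack_z t u i = (if i = 0 then t - u 0 else t * u (i - 1) - u i)"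

definition slack_h :: "real \<Rightarrow> (nat \<Rightarrow> real) \<Rightarrow> (nat \<Rightarrow> real) \<Rightarrow> nat \<Rightarrow> real" where
  "slack_h t u v i = (if i = 0 then t ^ 2 - v 0 else coef t i * (u (i - 1) + v (i - 1)) - v i)"

definition slack_z' :: "real \<Rightarrow> (nat \<Rightarrow> real) \<Rightarrow> (nat \<Rightarrow> real) \<Rightarrow> nat \<Rightarrow> real" where
  "slack_z' t u v i = t * v (i - 1) - u i"

definition strictly_feasible :: "nat \<Rightarrow> real \<Rightarrow> (nat \<Rightarrow> real) \<Rightarrow> (nat \<Rightarrow> real) \<Rightarrow> bool" where
  "strictly_feasible r t u v \<longleftrightarrow>
     (\<forall>i\<le>r. u i > 0 \<and> v i > 0 \<and> slack_z t u i > 0 \<and> slack_h t u v i > 0 \<and>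
             (i \<ge> 1 \<longrightarrow> slack_z' t u v i > 0))"

lemma strictly_feasibleD:
  "strictly_feasible r t u v \<Longrightarrow> i \<le> r \<Longrightarrow>
     u i > 0 \<and> v i > 0 \<and> slack_z t u i > 0 \<and> slack_h t u v i > 0 \<and> (i \<ge> 1 \<longrightarrow> slack_z' t u v i > 0)"
  unfolding strictly_feasible_def by auto

lemma cp_system_facts:
  assumes cp: "cp_system r t mu u v z z' h ya ya' yb su sv" and mu: "mu > 0"
  shows "\<And>i. i \<in> {0..r} \<Longrightarrow> z i = slack_z t u i \<and> h i = slack_h t u v i \<and>
           su i = mu / u i \<and> sv i = mu / v i \<and> ya i = mu / z i \<and> yb i = mu / h i \<and>
           u i > 0 \<and> v i > 0 \<and> z i > 0 \<and> h i > 0"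
    and "\<And>i. i \<in> {1..r} \<Longrightarrow> z' i = slack_z' t u v i \<and> ya' i = mu / z' i \<and> z' i > 0"
proof -
  note C = cp[unfolded cp_system_def]
  have eq0: "u 0 + z 0 = t" "v 0 + h 0 = t ^ 2" using C by blast+
  have eq: "\<And>i. i \<in> {1..r} \<Longrightarrow> u i + z i = t * u (i - 1) \<and> u i + z' i = t * v (i - 1) \<and>
              v i + h i = coef t i * (u (i - 1) + v (i - 1))" using C by blast
  have cen: "\<And>i. i \<in> {0..r} \<Longrightarrow> z i * ya i = mu \<and> h i * yb i = mu \<and> u i * su i = mu \<and> v i * sv i = mu"
    using C by blast
  have pos: "\<And>i. i \<in> {0..r} \<Longrightarrow> u i > 0 \<and> v i > 0 \<and> z i > 0 \<and> h i > 0" using C by blast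
  show "z i = slack_z t u i \<and> h i = slack_h t u v i \<and>
           su i = mu / u i \<and> sv i = mu / v i \<and> ya i = mu / z i \<and> yb i = mu / h i \<and>
           u i > 0 \<and> v i > 0 \<and> z i > 0 \<and> h i > 0" if i: "i \<in> {0..r}" for i
  proof -
    have "z i = slack_z t u i \<and> h i = slack_h t u v i"
    proof (cases "i = 0")
      case True then show ?thesis using eq0 by (simp add: slack_z_def slack_h_def algebra_simps)
    next
      case False then show ?thesis using eq[of i] i by (simp add: slack_z_def slack_h_def algebra_simps)
    qed
    then show ?thesis using pos[OF i] cen[OF i] by (auto simp: field_simps)
  qed
  show "z' i = slack_z' t u v i \<and> ya' i = mu / z' i \<and> z' i > 0" if i: "i \<in> {1..r}" for i
  proof -
    have "z' i * ya' i = mu" "z' i > 0" using C i by auto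
    then show ?thesis using eq[OF i] unfolding slack_z'_def by (auto simp: field_simps)
  qed
qed

lemma cp_system_dual_eqs:
  assumes "cp_system r t mu u v z z' h ya ya' yb su sv"
  shows "\<And>i. i \<in> {0..r} \<Longrightarrow> su i = (if i = 0 then ya 0 else ya i + ya' i)
               - (if i < r then t * ya (i + 1) + coef t (i + 1) * yb (i + 1) else 0)"
    and "\<And>i. i \<in> {0..r} \<Longrightarrow> sv i = (if i = 0 then 1 else 0) + yb i
               - (if i < r then t * ya' (i + 1) + coef t (i + 1) * yb (i + 1) else 0)"
  using assms unfolding cp_system_def by blast+


section \<open>The duality identity and uniqueness of the primal part\<close>

text \<open>Telescoping form of the pairing between dual and primal variables: G i collects the
  terms of level i, and K i the terms of level i + 1 that the dual equation at level i
  subtracts.  Every G (i + 1) equals K i, so only level 0 survives.\<close>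

lemma dual_pairing_telescopes:
  fixes ya ya' yb u v :: "nat \<Rightarrow> real" and t :: real
  defines "G \<equiv> \<lambda>i. ya i * u i + (if i = 0 then 0 else ya' i * u i) + (if i = 0 then 1 else 0) * v i
      + yb i * v i + ya i * slack_z t u i + yb i * slack_h t u v i
      + (if i = 0 then 0 else ya' i * slack_z' t u v i)"
  defines "K \<equiv> \<lambda>i. (t * ya (i + 1) + coef t (i + 1) * yb (i + 1)) * u i
      + (t * ya' (i + 1) + coef t (i + 1) * yb (i + 1)) * v i"
  shows "(\<Sum>i=0..r. G i) - (\<Sum>i<r. K i) = v 0 + t * ya 0 + t ^ 2 * yb 0"
proof (induction r)
  case 0
  then show ?case by (simp add: G_def slack_z_def slack_h_def algebra_simps)
next
  case (Suc r)
  have "G (Suc r) = K r" by (simp add: G_def K_def slack_z_def slack_h_def slack_z'_def algebra_simps)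
  then show ?case using Suc by simp
qed

text \<open>The identity s^T x' + y^T w' = c^T x' + b^T y, valid for every primal point (u', v')
  (not necessarily feasible) when (y, s) satisfies the dual equations -A^T y + s = c.\<close>

lemma duality_identity:
  fixes ya ya' yb u v su sv :: "nat \<Rightarrow> real"
  assumes su: "\<And>i. i \<in> {0..r} \<Longrightarrow> su i = (if i = 0 then ya 0 else ya i + ya' i)
               - (if i < r then t * ya (i + 1) + coef t (i + 1) * yb (i + 1) else 0)"
  assumes sv: "\<And>i. i \<in> {0..r} \<Longrightarrow> sv i = (if i = 0 then 1 else 0) + yb i
               - (if i < r then t * ya' (i + 1) + coef t (i + 1) * yb (i + 1) else 0)"
  shows "(\<Sum>i=0..r. su i * u i + sv i * v i + ya i * slack_z t u i + yb i * slack_h t u v i)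
        + (\<Sum>i=1..r. ya' i * slack_z' t u v i) = v 0 + t * ya 0 + t ^ 2 * yb 0"
proof -
  define G where "G \<equiv> \<lambda>i. ya i * u i + (if i = 0 then 0 else ya' i * u i) + (if i = 0 then 1 else 0) * v i
      + yb i * v i + ya i * slack_z t u i + yb i * slack_h t u v i
      + (if i = 0 then 0 else ya' i * slack_z' t u v i)"
  define K where "K \<equiv> \<lambda>i. (t * ya (i + 1) + coef t (i + 1) * yb (i + 1)) * u i
      + (t * ya' (i + 1) + coef t (i + 1) * yb (i + 1)) * v i"
  have shift: "(\<Sum>i=1..r. ya' i * slack_z' t u v i) = (\<Sum>i=0..r. if i = 0 then 0 else ya' i * slack_z' t u v i)"
    by (simp add: sum.atLeast_Suc_atMost)
  have level: "su i * u i + sv i * v i + ya i * slack_z t u i + yb i * slack_h t u v i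
        + (if i = 0 then 0 else ya' i * slack_z' t u v i) = G i - (if i < r then K i else 0)"
    if "i \<in> {0..r}" for i
    unfolding su[OF that] sv[OF that] by (auto simp: G_def K_def algebra_simps)
  have K_sum: "(\<Sum>i=0..r. if i < r then K i else 0) = (\<Sum>i<r. K i)"
    by (rule sum.mono_neutral_cong_right) auto
  have "(\<Sum>i=0..r. su i * u i + sv i * v i + ya i * slack_z t u i + yb i * slack_h t u v i)
        + (\<Sum>i=1..r. ya' i * slack_z' t u v i) = (\<Sum>i=0..r. G i - (if i < r then K i else 0))"
    unfolding shift sum.distrib[symmetric] by (rule sum.cong) (use level in auto)
  also have "\<dots> = (\<Sum>i=0..r. G i) - (\<Sum>i<r. K i)" by (simp add: sum_subtractf K_sum)
  also have "\<dots> = v 0 + t * ya 0 + t ^ 2 * yb 0" unfolding G_def K_def by (rule dual_pairing_telescopes)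
  finally show ?thesis .
qed

text \<open>At a central point the dual variables are mu divided by the primal coordinates, so the
  duality identity becomes a statement about ratios of primal coordinates.\<close>

lemma centrality_identity:
  assumes cp: "cp_system r t mu u v z z' h ya ya' yb su sv" and mu: "mu > 0"
  shows "(\<Sum>i=0..r. mu * u' i / u i + mu * v' i / v i + mu * slack_z t u' i / slack_z t u i
                    + mu * slack_h t u' v' i / slack_h t u v i)
        + (\<Sum>i=1..r. mu * slack_z' t u' v' i / slack_z' t u v i) = v' 0 + t * ya 0 + t ^ 2 * yb 0"
proof -
  note F = cp_system_facts[OF cp mu]
  have "(\<Sum>i=0..r. su i * u' i + sv i * v' i + ya i * slack_z t u' i + yb i * slack_h t u' v' i)
        + (\<Sum>i=1..r. ya' i * slack_z' t u' v' i) = v' 0 + t * ya 0 + t ^ 2 * yb 0"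
    by (rule duality_identity) (use cp_system_dual_eqs[OF cp] in auto)
  moreover have "(\<Sum>i=0..r. su i * u' i + sv i * v' i + ya i * slack_z t u' i + yb i * slack_h t u' v' i)
     = (\<Sum>i=0..r. mu * u' i / u i + mu * v' i / v i + mu * slack_z t u' i / slack_z t u i
                  + mu * slack_h t u' v' i / slack_h t u v i)"
    by (rule sum.cong) (use F(1) in auto)
  moreover have "(\<Sum>i=1..r. ya' i * slack_z' t u' v' i) = (\<Sum>i=1..r. mu * slack_z' t u' v' i / slack_z' t u v i)"
    by (rule sum.cong) (use F(2) in auto)
  ultimately show ?thesis by simp
qed

text \<open>The duality gap at a central point: b^T y - c^T x = n * mu with n = 5r + 4 the number
  of primal coordinates.\<close>

lemma central_duality_gap:
  assumes cp: "cp_system r t mu u v z z' h ya ya' yb su sv" and mu: "mu > 0"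
  shows "(5 * real r + 4) * mu = v 0 + t * ya 0 + t ^ 2 * yb 0"
proof -
  note F = cp_system_facts[OF cp mu]
  have "(\<Sum>i=0..r. mu * u i / u i + mu * v i / v i + mu * slack_z t u i / slack_z t u i
                   + mu * slack_h t u v i / slack_h t u v i) = (\<Sum>i=0..r. 4 * mu)"
  proof (rule sum.cong)
    fix i assume "i \<in> {0..r}"
    from F(1)[OF this] show "mu * u i / u i + mu * v i / v i + mu * slack_z t u i / slack_z t u i
                   + mu * slack_h t u v i / slack_h t u v i = 4 * mu" by auto
  qed simp
  moreover have "(\<Sum>i=1..r. mu * slack_z' t u v i / slack_z' t u v i) = (\<Sum>i=1..r. mu)"
    by (rule sum.cong) (use F(2) in force)+
  ultimately show ?thesis using centrality_identity[OF cp mu, of u v] by (simp add: algebra_simps)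
qed

definition ratio_excess :: "real \<Rightarrow> real \<Rightarrow> real" where
  "ratio_excess a b = a / b + b / a - 2"

lemma ratio_excess_eq: "a > 0 \<Longrightarrow> b > 0 \<Longrightarrow> ratio_excess a b = (a - b) ^ 2 / (a * b)"
  unfolding ratio_excess_def by (simp add: field_simps power2_eq_square)

lemma ratio_excess_nonneg: "a > 0 \<Longrightarrow> b > 0 \<Longrightarrow> ratio_excess a b \<ge> 0"
  by (simp add: ratio_excess_eq)

lemma ratio_excess_zero: "a > 0 \<Longrightarrow> b > 0 \<Longrightarrow> ratio_excess a b = 0 \<Longrightarrow> a = b"
  by (simp add: ratio_excess_eq)

text \<open>Uniqueness: adding the centrality identity for two central points with the roles of
  the points exchanged, and subtracting both duality gaps, gives mu times a sum of
  nonnegative ratio excesses that equals zero.\<close>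

lemma central_primal_unique:
  assumes cp1: "cp_system r t mu u1 v1 z1 z1' h1 ya1 ya1' yb1 su1 sv1"
      and cp2: "cp_system r t mu u2 v2 z2 z2' h2 ya2 ya2' yb2 su2 sv2" and mu: "mu > 0"
      and i: "i \<in> {0..r}"
  shows "u1 i = u2 i \<and> v1 i = v2 i"
proof -
  note F1 = cp_system_facts[OF cp1 mu] and F2 = cp_system_facts[OF cp2 mu]
  define q where "q i = ratio_excess (u2 i) (u1 i) + ratio_excess (v2 i) (v1 i)
    + ratio_excess (slack_z t u2 i) (slack_z t u1 i) + ratio_excess (slack_h t u2 v2 i) (slack_h t u1 v1 i)" for i
  define q' where "q' i = ratio_excess (slack_z' t u2 v2 i) (slack_z' t u1 v1 i)" for i
  define T where "T a b c d i = mu * a i / b i + mu * c i / d i + mu * slack_z t a i / slack_z t b i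
    + mu * slack_h t a c i / slack_h t b d i" for a b c d i
  define P where "P a b c d i = mu * slack_z' t a c i / slack_z' t b d i" for a b c d i
  have q_terms: "mu * q i = T u2 u1 v2 v1 i + T u1 u2 v1 v2 i - 8 * mu" if "i \<in> {0..r}" for i
    using F1(1)[OF that] F2(1)[OF that] unfolding q_def T_def ratio_excess_def by (simp add: field_simps)
  have q'_terms: "mu * q' i = P u2 u1 v2 v1 i + P u1 u2 v1 v2 i - 2 * mu" if "i \<in> {1..r}" for i
    using F1(2)[OF that] F2(2)[OF that] unfolding q'_def P_def ratio_excess_def by (simp add: field_simps)
  have "mu * ((\<Sum>i=0..r. q i) + (\<Sum>i=1..r. q' i))
      = (\<Sum>i=0..r. T u2 u1 v2 v1 i + T u1 u2 v1 v2 i - 8 * mu) + (\<Sum>i=1..r. P u2 u1 v2 v1 i + P u1 u2 v1 v2 i - 2 * mu)"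
    using q_terms q'_terms by (simp add: sum_distrib_left distrib_left)
  also have "\<dots> = ((\<Sum>i=0..r. T u2 u1 v2 v1 i) + (\<Sum>i=1..r. P u2 u1 v2 v1 i))
      + ((\<Sum>i=0..r. T u1 u2 v1 v2 i) + (\<Sum>i=1..r. P u1 u2 v1 v2 i)) - (10 * real r + 8) * mu"
    by (simp add: sum.distrib sum_subtractf algebra_simps)
  also have "\<dots> = 0"
    using centrality_identity[OF cp1 mu, of u2 v2] centrality_identity[OF cp2 mu, of u1 v1]
      central_duality_gap[OF cp1 mu] central_duality_gap[OF cp2 mu]
    unfolding T_def P_def by (simp add: algebra_simps)
  finally have sum0: "(\<Sum>i=0..r. q i) + (\<Sum>i=1..r. q' i) = 0" using mu by simp
  have q_nonneg: "q i \<ge> 0" if "i \<in> {0..r}" for i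
    using F1(1)[OF that] F2(1)[OF that] unfolding q_def by (auto intro!: add_nonneg_nonneg ratio_excess_nonneg)
  have "q' i \<ge> 0" if "i \<in> {1..r}" for i
    using F1(2)[OF that] F2(2)[OF that] unfolding q'_def by (auto intro!: ratio_excess_nonneg)
  then have "(\<Sum>i=1..r. q' i) \<ge> 0" by (rule sum_nonneg)
  moreover have "(\<Sum>i=0..r. q i) \<ge> 0" using q_nonneg by (rule sum_nonneg)
  ultimately have "(\<Sum>i=0..r. q i) = 0" using sum0 by linarith
  then have "q i = 0" using sum_nonneg_eq_0_iff[of "{0..r}" q] q_nonneg i by auto
  moreover have "ratio_excess (u2 i) (u1 i) \<ge> 0" "ratio_excess (v2 i) (v1 i) \<ge> 0"
      "ratio_excess (slack_z t u2 i) (slack_z t u1 i) \<ge> 0" "ratio_excess (slack_h t u2 v2 i) (slack_h t u1 v1 i) \<ge> 0"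
    using F1(1)[OF i] F2(1)[OF i] by (auto intro!: ratio_excess_nonneg)
  ultimately have "ratio_excess (u2 i) (u1 i) = 0" "ratio_excess (v2 i) (v1 i) = 0"
    unfolding q_def by linarith+
  then show ?thesis using F1(1)[OF i] F2(1)[OF i] ratio_excess_zero by metis
qed

lemma central_ratio_bound:
  assumes cp: "cp_system r t mu u v z z' h ya ya' yb su sv" and mu: "mu > 0"
    and feas: "strictly_feasible r t u' v'"
  defines "S \<equiv> v' 0 + t * ya 0 + t ^ 2 * yb 0"
  shows "\<And>i. i \<le> r \<Longrightarrow> mu * u' i / u i \<le> S \<and> mu * v' i / v i \<le> S \<and>
                 mu * slack_z t u' i / slack_z t u i \<le> S \<and> mu * slack_h t u' v' i / slack_h t u v i \<le> S"
    and "\<And>i. i \<in> {1..r} \<Longrightarrow> mu * slack_z' t u' v' i / slack_z' t u v i \<le> S"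
proof -
  note F = cp_system_facts[OF cp mu]
  define T where "T i = mu * u' i / u i + mu * v' i / v i + mu * slack_z t u' i / slack_z t u i
    + mu * slack_h t u' v' i / slack_h t u v i" for i
  define P where "P i = mu * slack_z' t u' v' i / slack_z' t u v i" for i
  have sum: "(\<Sum>i=0..r. T i) + (\<Sum>i=1..r. P i) = S"
    unfolding T_def P_def S_def by (rule centrality_identity[OF cp mu])
  have P_nonneg: "P i \<ge> 0" if "i \<in> {1..r}" for i
    using F(2)[OF that] strictly_feasibleD[OF feas, of i] that mu unfolding P_def by auto
  have T_nonneg: "0 \<le> mu * u' i / u i \<and> 0 \<le> mu * v' i / v i \<and> 0 \<le> mu * slack_z t u' i / slack_z t u i
      \<and> 0 \<le> mu * slack_h t u' v' i / slack_h t u v i" if "i \<in> {0..r}" for i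
    using F(1)[OF that] strictly_feasibleD[OF feas, of i] that mu by auto
  have "0 \<le> (\<Sum>i=1..r. P i)" using P_nonneg by (rule sum_nonneg)
  then have T_le: "(\<Sum>i=0..r. T i) \<le> S" using sum by linarith
  have "0 \<le> (\<Sum>i=0..r. T i)" using T_nonneg unfolding T_def by (intro sum_nonneg) auto
  then have P_le: "(\<Sum>i=1..r. P i) \<le> S" using sum by linarith
  show "mu * u' i / u i \<le> S \<and> mu * v' i / v i \<le> S \<and>
          mu * slack_z t u' i / slack_z t u i \<le> S \<and> mu * slack_h t u' v' i / slack_h t u v i \<le> S"
    if i: "i \<le> r" for i
  proof -
    have "T i \<le> (\<Sum>i=0..r. T i)"
      by (rule member_le_sum) (use i T_nonneg in \<open>auto simp: T_def\<close>)
    then show ?thesis using T_le T_nonneg[of i] i unfolding T_def by auto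
  qed
  show "mu * slack_z' t u' v' i / slack_z' t u v i \<le> S" if i: "i \<in> {1..r}" for i
  proof -
    have "P i \<le> (\<Sum>i=1..r. P i)" by (rule member_le_sum) (use i P_nonneg in auto)
    then show ?thesis using P_le unfolding P_def by linarith
  qed
qed

section \<open>Two-sided bounds by the scale of the central point\<close>

text \<open>The scale (scale_u, scale_v): the tropical recursion read multiplicatively, with the
  parameter m in place of mu.  Its valuations are (u_trop, v_trop) when m = t^lambda.\<close>

fun scale :: "real \<Rightarrow> real \<Rightarrow> nat \<Rightarrow> real \<times> real" where
  "scale t m 0 = (t, min (t ^ 2) m)"
| "scale t m (Suc i) = (t * min (fst (scale t m i)) (snd (scale t m i)),
      coef t (Suc i) * (fst (scale t m i) + snd (scale t m i)))"

definition scale_u :: "real \<Rightarrow> real \<Rightarrow> nat \<Rightarrow> real" where "scale_u t m i = fst (scale t m i)"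
definition scale_v :: "real \<Rightarrow> real \<Rightarrow> nat \<Rightarrow> real" where "scale_v t m i = snd (scale t m i)"

lemma scale_u_simps: "scale_u t m 0 = t" "scale_u t m (Suc i) = t * min (scale_u t m i) (scale_v t m i)"
  by (simp_all add: scale_u_def scale_v_def)

lemma scale_v_simps:
  "scale_v t m 0 = min (t ^ 2) m" "scale_v t m (Suc i) = coef t (Suc i) * (scale_u t m i + scale_v t m i)"
  by (simp_all add: scale_u_def scale_v_def)

text \<open>Scales of the slacks: the right-hand side of the constraint defining each slack.\<close>

definition scale_z :: "real \<Rightarrow> real \<Rightarrow> nat \<Rightarrow> real" where
  "scale_z t m i = (if i = 0 then t else t * scale_u t m (i - 1))"
definition scale_h :: "real \<Rightarrow> real \<Rightarrow> nat \<Rightarrow> real" where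
  "scale_h t m i = (if i = 0 then t ^ 2 else scale_v t m i)"
definition scale_z' :: "real \<Rightarrow> real \<Rightarrow> nat \<Rightarrow> real" where
  "scale_z' t m i = t * scale_v t m (i - 1)"

lemma coef_pos: "t > 0 \<Longrightarrow> coef t i > 0"
  by (simp add: coef_def)

lemma scale_pos:
  assumes "t > 0" "m > 0"
  shows "scale_u t m i > 0 \<and> scale_v t m i > 0"
  by (induction i) (use assms coef_pos[OF assms(1)] in \<open>auto simp: scale_u_simps scale_v_simps\<close>)

lemma scale_slack_pos:
  assumes "t > 0" "m > 0"
  shows "scale_z t m i > 0" "scale_h t m i > 0" "scale_z' t m i > 0"
  using scale_pos[OF assms] assms by (auto simp: scale_z_def scale_h_def scale_z'_def)

text \<open>The witness point: the scale at level i divided by 2^(i+1).  Halving at each level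
  leaves room for the slacks, so every coordinate is at least its scale over 2^(i+2).\<close>

definition witness_u :: "real \<Rightarrow> real \<Rightarrow> nat \<Rightarrow> real" where
  "witness_u t m i = scale_u t m i / 2 ^ (i + 1)"
definition witness_v :: "real \<Rightarrow> real \<Rightarrow> nat \<Rightarrow> real" where
  "witness_v t m i = scale_v t m i / 2 ^ (i + 1)"

lemma witness_bounds:
  assumes t: "t > 0" and m: "m > 0"
  shows "witness_u t m i \<ge> scale_u t m i / 2 ^ (i + 2)" "witness_v t m i \<ge> scale_v t m i / 2 ^ (i + 2)"
    "slack_z t (witness_u t m) i \<ge> scale_z t m i / 2 ^ (i + 2)"
    "slack_h t (witness_u t m) (witness_v t m) i \<ge> scale_h t m i / 2 ^ (i + 2)"
    "i \<ge> 1 \<Longrightarrow> slack_z' t (witness_u t m) (witness_v t m) i \<ge> scale_z' t m i / 2 ^ (i + 2)"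
proof -
  have pos: "scale_u t m j > 0" "scale_v t m j > 0" for j using scale_pos[OF t m] by auto
  show "witness_u t m i \<ge> scale_u t m i / 2 ^ (i + 2)" "witness_v t m i \<ge> scale_v t m i / 2 ^ (i + 2)"
    using pos[of i] unfolding witness_u_def witness_v_def by (auto intro: divide_left_mono)
  show "slack_z t (witness_u t m) i \<ge> scale_z t m i / 2 ^ (i + 2)"
  proof (cases i)
    case 0 then show ?thesis using t by (simp add: slack_z_def scale_z_def witness_u_def scale_u_simps)
  next
    case (Suc k)
    have "scale_u t m (Suc k) \<le> t * scale_u t m k" by (simp add: scale_u_simps mult_left_mono t less_imp_le)
    moreover have "t * scale_u t m k > 0" using pos t by simp
    ultimately show ?thesis using Suc t by (simp add: slack_z_def scale_z_def witness_u_def field_simps)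
  qed
  show "slack_h t (witness_u t m) (witness_v t m) i \<ge> scale_h t m i / 2 ^ (i + 2)"
  proof (cases i)
    case 0
    have "min (t ^ 2) m \<le> t ^ 2" "t ^ 2 > 0" using t by simp_all
    then have "2 * min (t ^ 2) m \<le> 3 * t ^ 2" by linarith
    then show ?thesis using 0 by (simp add: slack_h_def scale_h_def witness_v_def scale_v_simps)
  next
    case (Suc k)
    have "slack_h t (witness_u t m) (witness_v t m) i = scale_h t m i / 2 ^ (i + 1)"
      using Suc t by (simp add: slack_h_def scale_h_def witness_u_def witness_v_def scale_v_simps field_simps)
    moreover have "scale_h t m i / 2 ^ (i + 2) \<le> scale_h t m i / 2 ^ (i + 1)"
      using pos(2)[of i] Suc by (intro divide_left_mono) (auto simp: scale_h_def)
    ultimately show ?thesis by simp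
  qed
  show "slack_z' t (witness_u t m) (witness_v t m) i \<ge> scale_z' t m i / 2 ^ (i + 2)" if "i \<ge> 1"
  proof -
    obtain k where k: "i = Suc k" using \<open>i \<ge> 1\<close> by (cases i) auto
    have "scale_u t m (Suc k) \<le> t * scale_v t m k" by (simp add: scale_u_simps mult_left_mono t less_imp_le)
    moreover have "t * scale_v t m k > 0" using pos t by simp
    ultimately show ?thesis using k t by (simp add: slack_z'_def scale_z'_def witness_u_def witness_v_def field_simps)
  qed
qed

lemma witness_strictly_feasible:
  assumes t: "t > 0" and m: "m > 0"
  shows "strictly_feasible r t (witness_u t m) (witness_v t m)"
proof -
  have "0 < G / 2 ^ (i + 2)" if "G > 0" for G :: real and i :: nat using that by simp
  then show ?thesis
    using witness_bounds[OF t m] scale_pos[OF t m] scale_slack_pos[OF t m]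
    unfolding strictly_feasible_def by (meson less_le_trans)
qed

text \<open>The constants of the two-sided bounds: N = 5r + 4 is the number of primal coordinates
  (hence the duality gap in units of mu), and c comes from the witness point.\<close>

definition upper_const :: "nat \<Rightarrow> real" where
  "upper_const r = 5 * real r + 4"

definition lower_const :: "nat \<Rightarrow> real" where
  "lower_const r = 1 / (2 ^ (r + 2) * (upper_const r + 1))"

lemma consts_pos: "upper_const r \<ge> 1" "lower_const r > 0"
  unfolding lower_const_def upper_const_def by auto

text \<open>Upper bounds on the decision variables follow by induction from feasibility, once
  v_0 <= N * mu is known from the duality gap.\<close>

lemma central_upper_bound:
  assumes cp: "cp_system r t mu u v z z' h ya ya' yb su sv" and mu: "mu > 0" and t: "t > 0"
    and i: "i \<le> r"
  defines "N \<equiv> upper_const r"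
  shows "u i \<le> N * scale_u t mu i \<and> v i \<le> N * scale_v t mu i"
  using i
proof (induction i)
  case 0
  have N1: "N \<ge> 1" unfolding N_def by (rule consts_pos)
  have pos: "slack_z t u 0 > 0" "slack_h t u v 0 > 0" "u 0 > 0" "ya 0 > 0" "yb 0 > 0"
    using cp_system_facts(1)[OF cp mu, of 0] mu by auto
  have "N * mu = v 0 + t * ya 0 + t ^ 2 * yb 0"
    unfolding N_def upper_const_def by (rule central_duality_gap[OF cp mu])
  then have "v 0 < N * mu" using pos t by (smt (verit) mult_pos_pos zero_less_power)
  moreover have "v 0 < t ^ 2" using pos by (simp add: slack_h_def)
  ultimately have "v 0 \<le> N * min (t ^ 2) mu"
    using N1 by (smt (verit, best) min_def mult_le_cancel_right1 zero_le_power2)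
  moreover have "u 0 \<le> N * t" using pos N1 t by (simp add: slack_z_def) (smt (verit) mult_le_cancel_right1)
  ultimately show ?case by (simp add: scale_u_simps scale_v_simps)
next
  case (Suc k)
  have N0: "N \<ge> 0" using consts_pos(1)[of r] unfolding N_def by simp
  have IH: "u k \<le> N * scale_u t mu k" "v k \<le> N * scale_v t mu k" using Suc by auto
  have pos: "slack_z t u (Suc k) > 0" "slack_h t u v (Suc k) > 0" "slack_z' t u v (Suc k) > 0"
    using cp_system_facts[OF cp mu, of "Suc k"] Suc by auto
  have "u (Suc k) < t * u k" "u (Suc k) < t * v k" using pos by (auto simp: slack_z_def slack_z'_def)
  moreover have "t * u k \<le> N * (t * scale_u t mu k)" "t * v k \<le> N * (t * scale_v t mu k)"
    using IH t by (simp_all add: mult_left_mono mult.left_commute)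
  ultimately have "u (Suc k) \<le> N * (t * min (scale_u t mu k) (scale_v t mu k))"
    unfolding min_def by auto
  moreover have "v (Suc k) \<le> coef t (Suc k) * (N * scale_u t mu k + N * scale_v t mu k)"
    using pos IH coef_pos[OF t] by (simp add: slack_h_def) (smt (verit) mult_left_mono)
  ultimately show ?case using N0 by (simp add: scale_u_simps scale_v_simps algebra_simps)
qed

text \<open>The slacks are bounded by the right-hand sides of their constraints, hence by
  N times their scales.\<close>

lemma central_slack_upper_bound:
  assumes cp: "cp_system r t mu u v z z' h ya ya' yb su sv" and mu: "mu > 0" and t: "t > 0"
    and i: "i \<le> r"
  shows "slack_z t u i \<le> upper_const r * scale_z t mu i"
    "slack_h t u v i \<le> upper_const r * scale_h t mu i"
    "i \<ge> 1 \<Longrightarrow> slack_z' t u v i \<le> upper_const r * scale_z' t mu i"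
proof -
  note F = cp_system_facts[OF cp mu]
  define N where "N = upper_const r"
  have N1: "N \<ge> 1" unfolding N_def by (rule consts_pos)
  have up: "u j \<le> N * scale_u t mu j \<and> v j \<le> N * scale_v t mu j" if "j \<le> r" for j
    using central_upper_bound[OF cp mu t that] unfolding N_def .
  have pos: "u j > 0" "v j > 0" if "j \<le> r" for j using F(1)[of j] that by auto
  show "slack_z t u i \<le> N * scale_z t mu i"
  proof (cases i)
    case 0
    then show ?thesis using pos[of 0] N1 t by (simp add: slack_z_def scale_z_def) (smt (verit) mult_le_cancel_right1)
  next
    case (Suc k)
    then have "t * u k \<le> t * (N * scale_u t mu k)" using up[of k] i t by (simp add: mult_left_mono)
    then show ?thesis using Suc pos[OF i] by (simp add: slack_z_def scale_z_def algebra_simps)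
  qed
  show "slack_h t u v i \<le> N * scale_h t mu i"
  proof (cases i)
    case 0
    then show ?thesis using pos[of 0] N1 t by (simp add: slack_h_def scale_h_def)
      (smt (verit) mult_le_cancel_right1 zero_le_power2)
  next
    case (Suc k)
    have "coef t (Suc k) * (u k + v k) \<le> coef t (Suc k) * (N * scale_u t mu k + N * scale_v t mu k)"
      using up[of k] Suc i coef_pos[OF t, THEN less_imp_le] by (intro mult_left_mono) auto
    then show ?thesis using Suc pos[OF i] by (simp add: slack_h_def scale_h_def scale_v_simps algebra_simps)
  qed
  show "slack_z' t u v i \<le> N * scale_z' t mu i" if "i \<ge> 1"
  proof -
    obtain k where k: "i = Suc k" using \<open>i \<ge> 1\<close> by (cases i) auto
    then have "t * v k \<le> t * (N * scale_v t mu k)" using up[of k] i t by (simp add: mult_left_mono)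
    then show ?thesis using k pos[OF i] by (simp add: slack_z'_def scale_z'_def algebra_simps)
  qed
qed

lemma ratio_lower_bound:
  fixes G X X' mu N :: real
  assumes "G > 0" "X > 0" "mu > 0" "N \<ge> 0" "G / 2 ^ (i + 2) \<le> X'" "mu * X' / X \<le> (N + 1) * mu" "i \<le> r"
  shows "G / (2 ^ (r + 2) * (N + 1)) \<le> X"
proof -
  have "mu * X' \<le> mu * ((N + 1) * X)" using assms(2,3,6) by (simp add: field_simps)
  then have "X' \<le> (N + 1) * X" using assms(3) by simp
  moreover have "G \<le> 2 ^ (i + 2) * X'" using assms(5) by (simp add: field_simps)
  moreover have "(2::real) ^ (i + 2) \<le> 2 ^ (r + 2)" using assms(7) by (intro power_increasing) auto
  moreover have "X' \<ge> 0" using assms(1,5) by (smt (verit) divide_pos_pos zero_less_power)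
  ultimately have "G \<le> 2 ^ (r + 2) * ((N + 1) * X)"
    by (smt (verit) mult_right_mono mult_left_mono zero_le_power)
  moreover have "(2::real) ^ (r + 2) * (N + 1) > 0" using assms(4) by simp
  ultimately show ?thesis by (simp add: pos_divide_le_eq mult.commute mult.left_commute)
qed

text \<open>Lower bounds: compare the central point with the witness point in the centrality
  identity, whose right-hand side is then at most (N + 1) * mu.\<close>

lemma central_lower_bound:
  assumes cp: "cp_system r t mu u v z z' h ya ya' yb su sv" and mu: "mu > 0" and t: "t > 0"
    and i: "i \<le> r"
  shows "lower_const r * scale_u t mu i \<le> u i" "lower_const r * scale_v t mu i \<le> v i"
    "lower_const r * scale_z t mu i \<le> slack_z t u i"
    "lower_const r * scale_h t mu i \<le> slack_h t u v i"
    "i \<ge> 1 \<Longrightarrow> lower_const r * scale_z' t mu i \<le> slack_z' t u v i"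
proof -
  note F = cp_system_facts[OF cp mu]
  define N where "N = upper_const r"
  have N0: "N \<ge> 0" using consts_pos(1)[of r] unfolding N_def by simp
  have c_eq: "G / (2 ^ (r + 2) * (N + 1)) = lower_const r * G" for G
    unfolding lower_const_def N_def by simp
  have "N * mu = v 0 + t * ya 0 + t ^ 2 * yb 0"
    unfolding N_def upper_const_def by (rule central_duality_gap[OF cp mu])
  moreover have "witness_v t mu 0 \<le> mu" "v 0 > 0" using mu F(1)[of 0] by (simp_all add: witness_v_def scale_v_simps)
  ultimately have S: "witness_v t mu 0 + t * ya 0 + t ^ 2 * yb 0 \<le> (N + 1) * mu"
    by (simp add: algebra_simps)
  have lower: "lower_const r * G \<le> X"
    if "G > 0" "X > 0" "G / 2 ^ (i + 2) \<le> X'" "mu * X' / X \<le> witness_v t mu 0 + t * ya 0 + t ^ 2 * yb 0"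
    for G X X'
    using ratio_lower_bound[OF that(1,2) mu N0 that(3) order_trans[OF that(4) S] i] unfolding c_eq .
  note ratio = central_ratio_bound[OF cp mu witness_strictly_feasible[OF t mu]]
  note wb = witness_bounds[OF t mu] and spos = scale_pos[OF t mu] and sspos = scale_slack_pos[OF t mu]
  have Fi: "u i > 0" "v i > 0" "slack_z t u i > 0" "slack_h t u v i > 0" using F(1)[of i] i by auto
  show "lower_const r * scale_u t mu i \<le> u i"
    by (rule lower[OF _ _ wb(1)]) (use spos Fi ratio(1)[OF i] in auto)
  show "lower_const r * scale_v t mu i \<le> v i"
    by (rule lower[OF _ _ wb(2)]) (use spos Fi ratio(1)[OF i] in auto)
  show "lower_const r * scale_z t mu i \<le> slack_z t u i"
    by (rule lower[OF _ _ wb(3)]) (use sspos Fi ratio(1)[OF i] in auto)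
  show "lower_const r * scale_h t mu i \<le> slack_h t u v i"
    by (rule lower[OF _ _ wb(4)]) (use sspos Fi ratio(1)[OF i] in auto)
  show "lower_const r * scale_z' t mu i \<le> slack_z' t u v i" if i1: "i \<ge> 1"
  proof -
    have i': "i \<in> {1..r}" using i i1 by simp
    show ?thesis by (rule lower[OF _ _ wb(5)[OF i1]]) (use sspos F(2)[OF i'] ratio(2)[OF i'] in auto)
  qed
qed

section \<open>A calculus for valuations\<close>

text \<open>Constant factors do not change valuations, since c / ln t tends to 0.\<close>

lemma const_over_ln_tendsto_0: "((\<lambda>t::real. c / ln t) \<longlongrightarrow> 0) at_top"
  by (rule tendsto_divide_0[OF tendsto_const]) (rule filterlim_at_top_imp_at_infinity[OF ln_at_top])

lemma has_val_cong:
  assumes "has_val f a" "\<forall>\<^sub>F t in at_top. f t = g t"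
  shows "has_val g a"
  unfolding has_val_def
  by (rule Lim_transform_eventually[OF assms(1)[unfolded has_val_def]]) (use assms(2) in \<open>eventually_elim, simp\<close>)

lemma has_val_powr: "has_val (\<lambda>t. t powr a) a"
  unfolding has_val_def
proof (rule Lim_transform_eventually[OF tendsto_const])
  show "\<forall>\<^sub>F t::real in at_top. a = ln \<bar>t powr a\<bar> / ln t"
    using eventually_gt_at_top[of 1] by eventually_elim (simp add: ln_powr)
qed

lemma has_val_id: "has_val (\<lambda>t. t) 1"
proof (rule has_val_cong[OF has_val_powr])
  show "\<forall>\<^sub>F t in at_top. (t::real) powr 1 = t"
    by (rule eventually_mono[OF eventually_gt_at_top[of 0]]) simp
qed

lemma has_val_square: "has_val (\<lambda>t. t ^ 2) 2"
proof (rule has_val_cong[OF has_val_powr])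
  show "\<forall>\<^sub>F t in at_top. (t::real) powr 2 = t ^ 2"
    by (rule eventually_mono[OF eventually_gt_at_top[of 0]]) (simp add: powr_realpow)
qed

lemma has_val_squeeze:
  assumes hG: "has_val G a" and c: "c > 0" and C: "C > 0"
    and ev: "\<forall>\<^sub>F t in at_top. G t > 0 \<and> c * G t \<le> f t \<and> f t \<le> C * G t"
  shows "has_val f a"
  unfolding has_val_def
proof (rule tendsto_sandwich)
  have G: "((\<lambda>t. ln \<bar>G t\<bar> / ln t) \<longlongrightarrow> a) at_top" using hG unfolding has_val_def .
  show "((\<lambda>t. ln c / ln t + ln \<bar>G t\<bar> / ln t) \<longlongrightarrow> a) at_top"
    using tendsto_add[OF const_over_ln_tendsto_0 G] by simp
  show "((\<lambda>t. ln C / ln t + ln \<bar>G t\<bar> / ln t) \<longlongrightarrow> a) at_top"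
    using tendsto_add[OF const_over_ln_tendsto_0 G] by simp
  show "\<forall>\<^sub>F t in at_top. ln c / ln t + ln \<bar>G t\<bar> / ln t \<le> ln \<bar>f t\<bar> / ln t"
    using ev eventually_gt_at_top[of 1]
  proof eventually_elim
    case (elim t)
    then have cG: "c * G t > 0" using c by simp
    then have "ln (c * G t) \<le> ln (f t)" using elim by (subst ln_le_cancel_iff) auto
    then have "ln c + ln (G t) \<le> ln (f t)" using c elim by (simp add: ln_mult)
    moreover have "ln t > 0" "\<bar>f t\<bar> = f t" using cG elim by auto
    ultimately show ?case using elim by (simp add: add_divide_distrib[symmetric] divide_right_mono)
  qed
  show "\<forall>\<^sub>F t in at_top. ln \<bar>f t\<bar> / ln t \<le> ln C / ln t + ln \<bar>G t\<bar> / ln t"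
    using ev eventually_gt_at_top[of 1]
  proof eventually_elim
    case (elim t)
    then have "f t > 0" using c by (smt (verit) mult_pos_pos)
    then have "ln (f t) \<le> ln (C * G t)" using C elim by (subst ln_le_cancel_iff) auto
    then have "ln (f t) \<le> ln C + ln (G t)" using C elim by (simp add: ln_mult)
    moreover have "ln t > 0" using elim by simp
    ultimately show ?case using elim \<open>f t > 0\<close> by (simp add: add_divide_distrib[symmetric] divide_right_mono)
  qed
qed

lemma has_val_mult:
  assumes "has_val f a" "has_val g b" "\<forall>\<^sub>F t in at_top. f t > 0 \<and> g t > 0"
  shows "has_val (\<lambda>t. f t * g t) (a + b)"
  unfolding has_val_def
proof (rule Lim_transform_eventually[OF tendsto_add[OF assms(1,2)[unfolded has_val_def]]])
  show "\<forall>\<^sub>F t in at_top. ln \<bar>f t\<bar> / ln t + ln \<bar>g t\<bar> / ln t = ln \<bar>f t * g t\<bar> / ln t"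
    using assms(3) by eventually_elim (simp add: ln_mult add_divide_distrib)
qed

lemma ln_ratio_min_max:
  fixes t a b :: real
  assumes "t > 1" "a > 0" "b > 0"
  shows "ln (min a b) / ln t = min (ln a / ln t) (ln b / ln t)"
    and "ln (max a b) / ln t = max (ln a / ln t) (ln b / ln t)"
proof -
  have mono: "ln x / ln t \<le> ln y / ln t" if "0 < x" "x \<le> y" for x y :: real
  proof (rule divide_right_mono)
    show "ln x \<le> ln y" using that by simp
    show "ln t \<ge> 0" using assms(1) by simp
  qed
  show "ln (min a b) / ln t = min (ln a / ln t) (ln b / ln t)"
    "ln (max a b) / ln t = max (ln a / ln t) (ln b / ln t)"
    using mono[of a b] mono[of b a] assms(2,3) by (auto simp: min_def max_def)
qed

lemma has_val_min:
  assumes "has_val f a" "has_val g b" "\<forall>\<^sub>F t in at_top. f t > 0 \<and> g t > 0"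
  shows "has_val (\<lambda>t. min (f t) (g t)) (min a b)"
  unfolding has_val_def
proof (rule Lim_transform_eventually[OF tendsto_min[OF assms(1,2)[unfolded has_val_def]]])
  show "\<forall>\<^sub>F t in at_top. min (ln \<bar>f t\<bar> / ln t) (ln \<bar>g t\<bar> / ln t) = ln \<bar>min (f t) (g t)\<bar> / ln t"
    using assms(3) eventually_gt_at_top[of 1]
  proof eventually_elim
    case (elim t)
    then have "\<bar>min (f t) (g t)\<bar> = min (f t) (g t)" by auto
    then show ?case using elim by (simp add: ln_ratio_min_max(1))
  qed
qed

lemma has_val_max:
  assumes "has_val f a" "has_val g b" "\<forall>\<^sub>F t in at_top. f t > 0 \<and> g t > 0"
  shows "has_val (\<lambda>t. max (f t) (g t)) (max a b)"
  unfolding has_val_def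
proof (rule Lim_transform_eventually[OF tendsto_max[OF assms(1,2)[unfolded has_val_def]]])
  show "\<forall>\<^sub>F t in at_top. max (ln \<bar>f t\<bar> / ln t) (ln \<bar>g t\<bar> / ln t) = ln \<bar>max (f t) (g t)\<bar> / ln t"
    using assms(3) eventually_gt_at_top[of 1]
  proof eventually_elim
    case (elim t)
    then have "\<bar>max (f t) (g t)\<bar> = max (f t) (g t)" by auto
    then show ?case using elim by (simp add: ln_ratio_min_max(2))
  qed
qed

text \<open>A sum of positive germs lies between their maximum and twice it.\<close>

lemma has_val_add:
  assumes "has_val f a" "has_val g b" "\<forall>\<^sub>F t in at_top. f t > 0 \<and> g t > 0"
  shows "has_val (\<lambda>t. f t + g t) (max a b)"
proof (rule has_val_squeeze[OF has_val_max[OF assms], of 1 2])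
  show "\<forall>\<^sub>F t in at_top. max (f t) (g t) > 0 \<and> 1 * max (f t) (g t) \<le> f t + g t
          \<and> f t + g t \<le> 2 * max (f t) (g t)"
    using assms(3) by eventually_elim auto
qed auto

lemma scale_val:
  "has_val (\<lambda>t. scale_u t (t powr lam) i) (u_trop lam i) \<and> has_val (\<lambda>t. scale_v t (t powr lam) i) (v_trop lam i)"
proof (induction i)
  case 0
  have "has_val (\<lambda>t. min (t ^ 2) (t powr lam)) (min 2 lam)"
    by (rule has_val_min[OF has_val_square has_val_powr])
      (use eventually_gt_at_top[of 0] in \<open>auto elim: eventually_mono\<close>)
  then show ?case using has_val_id by (simp add: scale_u_simps scale_v_simps u_trop_def v_trop_def)
next
  case (Suc i)
  have pos: "\<forall>\<^sub>F t in at_top. t > 0 \<and> scale_u t (t powr lam) i > 0 \<and> scale_v t (t powr lam) i > 0"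
    using eventually_gt_at_top[of 0] by eventually_elim (use scale_pos in auto)
  have "has_val (\<lambda>t. min (scale_u t (t powr lam) i) (scale_v t (t powr lam) i)) (min (u_trop lam i) (v_trop lam i))"
    by (rule has_val_min[OF Suc[THEN conjunct1] Suc[THEN conjunct2]]) (use pos in \<open>auto elim: eventually_mono\<close>)
  then have "has_val (\<lambda>t. t * min (scale_u t (t powr lam) i) (scale_v t (t powr lam) i))
      (1 + min (u_trop lam i) (v_trop lam i))"
    by (rule has_val_mult[OF has_val_id]) (use pos in \<open>eventually_elim, auto\<close>)
  moreover
  have "has_val (\<lambda>t. scale_u t (t powr lam) i + scale_v t (t powr lam) i) (max (u_trop lam i) (v_trop lam i))"
    by (rule has_val_add[OF Suc[THEN conjunct1] Suc[THEN conjunct2]]) (use pos in \<open>auto elim: eventually_mono\<close>)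
  then have "has_val (\<lambda>t. coef t (Suc i) * (scale_u t (t powr lam) i + scale_v t (t powr lam) i))
      ((1 - 1 / 2 ^ Suc i) + max (u_trop lam i) (v_trop lam i))"
    unfolding coef_def by (rule has_val_mult[OF has_val_powr]) (use pos in \<open>eventually_elim, auto\<close>)
  ultimately show ?case by (simp add: scale_u_simps scale_v_simps u_trop_def v_trop_def)
qed

lemma scale_slack_val:
  "has_val (\<lambda>t. scale_z t (t powr lam) i) (z_trop lam i)"
  "has_val (\<lambda>t. scale_h t (t powr lam) i) (h_trop lam i)"
  "has_val (\<lambda>t. scale_z' t (t powr lam) i) (z'_trop lam i)"
proof -
  have pos: "\<forall>\<^sub>F t in at_top. t > 0 \<and> scale_u t (t powr lam) j > 0 \<and> scale_v t (t powr lam) j > 0" for j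
    using eventually_gt_at_top[of 0] by eventually_elim (use scale_pos in auto)
  show "has_val (\<lambda>t. scale_z t (t powr lam) i) (z_trop lam i)"
  proof (cases i)
    case 0 then show ?thesis using has_val_id by (simp add: scale_z_def z_trop_def)
  next
    case (Suc k)
    have "has_val (\<lambda>t. t * scale_u t (t powr lam) k) (1 + u_trop lam k)"
      by (rule has_val_mult[OF has_val_id scale_val[THEN conjunct1]]) (use pos[of k] in \<open>eventually_elim, auto\<close>)
    then show ?thesis using Suc by (simp add: scale_z_def z_trop_def)
  qed
  show "has_val (\<lambda>t. scale_h t (t powr lam) i) (h_trop lam i)"
    using has_val_square scale_val[of lam i] by (cases i) (simp_all add: scale_h_def h_trop_def)
  show "has_val (\<lambda>t. scale_z' t (t powr lam) i) (z'_trop lam i)"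
    unfolding scale_z'_def z'_trop_def
    by (rule has_val_mult[OF has_val_id scale_val[THEN conjunct2]]) (use pos[of "i - 1"] in \<open>eventually_elim, auto\<close>)
qed

section \<open>Existence of the central point: minimizing the logarithmic barrier\<close>

lemma coef_le: "t \<ge> 1 \<Longrightarrow> coef t i \<le> t"
proof -
  assume t: "t \<ge> 1"
  have "t powr (1 - 1 / 2 ^ i) \<le> t powr 1" by (rule powr_mono) (use t in auto)
  then show ?thesis using t by (simp add: coef_def)
qed

text \<open>Each level multiplies the bound on the decision variables by at most 2t.\<close>

lemma strictly_feasible_decision_bound:
  assumes t: "t \<ge> 1" and feas: "strictly_feasible r t u v"
  shows "i \<le> r \<Longrightarrow> u i \<le> t ^ 2 * (2 * t) ^ i \<and> v i \<le> t ^ 2 * (2 * t) ^ i"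
proof (induction i)
  case 0
  have "u 0 < t" "v 0 < t ^ 2" using strictly_feasibleD[OF feas, of 0] by (auto simp: slack_z_def slack_h_def)
  moreover have "t \<le> t ^ 2" using t by (simp add: power2_eq_square)
  ultimately show ?case by simp
next
  case (Suc k)
  then have IH: "u k \<le> t ^ 2 * (2 * t) ^ k" "v k \<le> t ^ 2 * (2 * t) ^ k" by auto
  have pos: "slack_z t u (Suc k) > 0" "slack_h t u v (Suc k) > 0" "u k > 0" "v k > 0"
    using strictly_feasibleD[OF feas, of "Suc k"] strictly_feasibleD[OF feas, of k] Suc by auto
  have "u (Suc k) < t * u k" using pos by (simp add: slack_z_def)
  also have "\<dots> \<le> t * (t ^ 2 * (2 * t) ^ k)" using IH t by (simp add: mult_left_mono)
  also have "\<dots> \<le> t ^ 2 * (2 * t) ^ Suc k" using t by (simp add: algebra_simps)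
  finally have u_le: "u (Suc k) \<le> t ^ 2 * (2 * t) ^ Suc k" by simp
  have "v (Suc k) < coef t (Suc k) * (u k + v k)" using pos by (simp add: slack_h_def)
  also have "\<dots> \<le> t * (u k + v k)" using coef_le[OF t] pos by (intro mult_right_mono) auto
  also have "\<dots> \<le> t * (2 * (t ^ 2 * (2 * t) ^ k))" using IH t by (intro mult_left_mono) auto
  also have "\<dots> = t ^ 2 * (2 * t) ^ Suc k" by (simp add: algebra_simps)
  finally show ?case using u_le by simp
qed

definition box_radius :: "nat \<Rightarrow> real \<Rightarrow> real" where
  "box_radius r t = t ^ 2 * (2 * t) ^ r"

lemma box_radius_ge_1:
  assumes t: "t \<ge> 1"
  shows "box_radius r t \<ge> 1"
proof -
  have "1 \<le> t ^ 2" using t by (simp add: one_le_power)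
  moreover have "1 \<le> (2 * t) ^ r" by (rule one_le_power) (use t in simp)
  ultimately show ?thesis unfolding box_radius_def using mult_mono[of 1 "t ^ 2" 1 "(2 * t) ^ r"] by simp
qed

lemma strictly_feasible_bounded:
  assumes t: "t \<ge> 1" and feas: "strictly_feasible r t u v" and i: "i \<le> r"
  defines "R \<equiv> box_radius r t"
  shows "u i \<le> R \<and> v i \<le> R \<and> slack_z t u i \<le> R \<and> slack_h t u v i \<le> R \<and>
         (i \<ge> 1 \<longrightarrow> slack_z' t u v i \<le> R)"
proof -
  have mono: "t ^ 2 * (2 * t) ^ j \<le> R" if "j \<le> r" for j
    unfolding R_def box_radius_def using t that by (intro mult_left_mono power_increasing) auto
  note dec = strictly_feasible_decision_bound[OF t feas]
  have pos: "u i > 0" "v i > 0" using strictly_feasibleD[OF feas i] by auto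
  have step: "t * x \<le> t ^ 2 * (2 * t) ^ Suc k" if "x \<le> t ^ 2 * (2 * t) ^ k" for x k
  proof -
    have "t * x \<le> t * (t ^ 2 * (2 * t) ^ k)" using that t by (intro mult_left_mono) auto
    also have "\<dots> \<le> t ^ 2 * (2 * t) ^ Suc k" using t by (simp add: algebra_simps)
    finally show ?thesis .
  qed
  have z: "slack_z t u i \<le> R"
  proof (cases i)
    case 0
    have "t \<le> t ^ 2" using t by (simp add: power2_eq_square)
    then show ?thesis using 0 pos mono[of 0] by (simp add: slack_z_def)
  next
    case (Suc k) then show ?thesis using step[of "u k" k] dec[of k] pos mono[OF i] i by (simp add: slack_z_def)
  qed
  have h: "slack_h t u v i \<le> R"
  proof (cases i)
    case 0 then show ?thesis using pos mono[of 0] by (simp add: slack_h_def)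
  next
    case (Suc k)
    have uk: "u k > 0" "v k > 0" using strictly_feasibleD[OF feas, of k] Suc i by auto
    have "coef t (Suc k) * (u k + v k) \<le> t * (u k + v k)" using coef_le[OF t] uk by (intro mult_right_mono) auto
    also have "\<dots> \<le> t * (2 * (t ^ 2 * (2 * t) ^ k))" using dec[of k] Suc i t by (intro mult_left_mono) auto
    also have "\<dots> = t ^ 2 * (2 * t) ^ Suc k" by (simp add: algebra_simps)
    finally show ?thesis using pos mono[OF i] Suc by (simp add: slack_h_def)
  qed
  have z': "slack_z' t u v i \<le> R" if "i \<ge> 1"
  proof -
    obtain k where k: "i = Suc k" using \<open>i \<ge> 1\<close> by (cases i) auto
    then show ?thesis using step[of "v k" k] dec[of k] pos mono[OF i] i by (simp add: slack_z'_def)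
  qed
  show ?thesis using dec[OF i] mono[OF i] z h z' by auto
qed

text \<open>The logarithmic barrier of LP_r, with mu > 0: its minimizer is the central point.\<close>

definition log_barrier_term :: "real \<Rightarrow> (nat \<Rightarrow> real) \<Rightarrow> (nat \<Rightarrow> real) \<Rightarrow> nat \<Rightarrow> real" where
  "log_barrier_term t u v i = ln (u i) + ln (v i) + ln (slack_z t u i) + ln (slack_h t u v i)
     + (if i = 0 then 0 else ln (slack_z' t u v i))"

definition barrier :: "nat \<Rightarrow> real \<Rightarrow> real \<Rightarrow> (nat \<Rightarrow> real) \<Rightarrow> (nat \<Rightarrow> real) \<Rightarrow> real" where
  "barrier r t mu u v = v 0 / mu - (\<Sum>i=0..r. log_barrier_term t u v i)"

definition near_boundary :: "nat \<Rightarrow> real \<Rightarrow> real \<Rightarrow> (nat \<Rightarrow> real) \<Rightarrow> (nat \<Rightarrow> real) \<Rightarrow> nat \<Rightarrow> bool" where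
  "near_boundary r t \<delta> u v i \<longleftrightarrow> u i < \<delta> \<or> v i < \<delta> \<or> slack_z t u i < \<delta> \<or> slack_h t u v i < \<delta>
     \<or> (i \<ge> 1 \<and> slack_z' t u v i < \<delta>)"

lemma log_barrier_term_bounds:
  assumes t: "t \<ge> 1" and feas: "strictly_feasible r t u v" and i: "i \<le> r"
  defines "R \<equiv> box_radius r t"
  shows "log_barrier_term t u v i \<le> 5 * ln R"
    and "\<delta> > 0 \<Longrightarrow> near_boundary r t \<delta> u v i \<Longrightarrow> log_barrier_term t u v i \<le> ln \<delta> + 4 * ln R"
proof -
  have lnR: "ln R \<ge> 0" unfolding R_def using box_radius_ge_1[OF t] by simp
  note pos = strictly_feasibleD[OF feas i] and bd = strictly_feasible_bounded[OF t feas i, folded R_def]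
  have l: "ln (u i) \<le> ln R" "ln (v i) \<le> ln R" "ln (slack_z t u i) \<le> ln R" "ln (slack_h t u v i) \<le> ln R"
    "(if i = 0 then 0 else ln (slack_z' t u v i)) \<le> ln R"
    using pos bd lnR by auto
  show "log_barrier_term t u v i \<le> 5 * ln R" using l unfolding log_barrier_term_def by linarith
  assume d: "\<delta> > 0" and near: "near_boundary r t \<delta> u v i"
  have lt: "ln q \<le> ln \<delta>" if "q > 0" "q < \<delta>" for q using d that by simp
  from near show "log_barrier_term t u v i \<le> ln \<delta> + 4 * ln R"
    unfolding near_boundary_def
  proof (elim disjE conjE)
    assume "u i < \<delta>" then show ?thesis using lt[of "u i"] pos l unfolding log_barrier_term_def by linarith
  next
    assume "v i < \<delta>" then show ?thesis using lt[of "v i"] pos l unfolding log_barrier_term_def by linarith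
  next
    assume "slack_z t u i < \<delta>"
    then show ?thesis using lt[of "slack_z t u i"] pos l unfolding log_barrier_term_def by linarith
  next
    assume "slack_h t u v i < \<delta>"
    then show ?thesis using lt[of "slack_h t u v i"] pos l unfolding log_barrier_term_def by linarith
  next
    assume i1: "i \<ge> 1" and "slack_z' t u v i < \<delta>"
    then have "ln (slack_z' t u v i) \<le> ln \<delta>" using lt[of "slack_z' t u v i"] pos by auto
    then show ?thesis using i1 l(1-4) unfolding log_barrier_term_def by simp
  qed
qed

lemma barrier_near_boundary:
  assumes t: "t \<ge> 1" and mu: "mu > 0" and feas: "strictly_feasible r t u v" and k: "k \<le> r"
    and d: "\<delta> > 0" and near: "near_boundary r t \<delta> u v k"
  shows "barrier r t mu u v \<ge> - ln \<delta> - (5 * real r + 4) * ln (box_radius r t)"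
proof -
  define R where "R = box_radius r t"
  have k': "k \<in> {0..r}" using k by simp
  have "(\<Sum>i=0..r. log_barrier_term t u v i)
      = log_barrier_term t u v k + (\<Sum>i\<in>{0..r}-{k}. log_barrier_term t u v i)"
    by (rule sum.remove[OF _ k']) simp
  also have "\<dots> \<le> (ln \<delta> + 4 * ln R) + real (card ({0..r}-{k})) * (5 * ln R)"
  proof (rule add_mono)
    show "log_barrier_term t u v k \<le> ln \<delta> + 4 * ln R"
      using log_barrier_term_bounds(2)[OF t feas k d near] unfolding R_def .
    show "(\<Sum>i\<in>{0..r}-{k}. log_barrier_term t u v i) \<le> real (card ({0..r}-{k})) * (5 * ln R)"
      by (rule sum_bounded_above) (use log_barrier_term_bounds(1)[OF t feas] in \<open>auto simp: R_def\<close>)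
  qed
  also have "real (card ({0..r}-{k})) = real r" using k' by simp
  finally have "(\<Sum>i=0..r. log_barrier_term t u v i) \<le> ln \<delta> + (5 * real r + 4) * ln R"
    by (simp add: algebra_simps)
  moreover have "v 0 / mu \<ge> 0" using strictly_feasibleD[OF feas, of 0] mu by simp
  ultimately show ?thesis unfolding barrier_def R_def by linarith
qed

text \<open>Points are pairs of sequences; only the coordinates 0..r matter.  Truncating the
  others to 0 places the relevant points in a compact box of the product space.\<close>

definition truncate :: "nat \<Rightarrow> (nat \<Rightarrow> real) \<Rightarrow> nat \<Rightarrow> real" where
  "truncate r u i = (if i \<le> r then u i else 0)"

lemma truncate_slacks:
  "i \<le> r \<Longrightarrow> slack_z t (truncate r u) i = slack_z t u i \<and>
     slack_h t (truncate r u) (truncate r v) i = slack_h t u v i \<and>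
     slack_z' t (truncate r u) (truncate r v) i = slack_z' t u v i"
  by (simp add: slack_z_def slack_h_def slack_z'_def truncate_def)

lemma truncate_strictly_feasible:
  "strictly_feasible r t (truncate r u) (truncate r v) = strictly_feasible r t u v"
  unfolding strictly_feasible_def by (auto simp: truncate_slacks) (auto simp: truncate_def)

lemma truncate_barrier: "barrier r t mu (truncate r u) (truncate r v) = barrier r t mu u v"
proof -
  have "log_barrier_term t (truncate r u) (truncate r v) i = log_barrier_term t u v i" if "i \<le> r" for i
    using that by (simp add: log_barrier_term_def truncate_slacks) (simp add: truncate_def)
  then have "(\<Sum>i=0..r. log_barrier_term t (truncate r u) (truncate r v) i) = (\<Sum>i=0..r. log_barrier_term t u v i)"
    by (intro sum.cong) auto
  then show ?thesis unfolding barrier_def by (simp add: truncate_def)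
qed

lemma truncate_near_boundary:
  "i \<le> r \<Longrightarrow> near_boundary r t \<delta> (truncate r u) (truncate r v) i = near_boundary r t \<delta> u v i"
  unfolding near_boundary_def by (simp add: truncate_slacks) (simp add: truncate_def)

lemma continuous_on_fst_coord [continuous_intros]:
  "continuous_on S (\<lambda>x::(nat \<Rightarrow> real) \<times> (nat \<Rightarrow> real). fst x i)"
  by (rule continuous_on_product_then_coordinatewise) (intro continuous_intros)

lemma continuous_on_snd_coord [continuous_intros]:
  "continuous_on S (\<lambda>x::(nat \<Rightarrow> real) \<times> (nat \<Rightarrow> real). snd x i)"
  by (rule continuous_on_product_then_coordinatewise) (intro continuous_intros)

lemma continuous_on_slacks [continuous_intros]:
  "continuous_on S (\<lambda>x::(nat \<Rightarrow> real) \<times> (nat \<Rightarrow> real). slack_z t (fst x) i)"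
  "continuous_on S (\<lambda>x::(nat \<Rightarrow> real) \<times> (nat \<Rightarrow> real). slack_h t (fst x) (snd x) i)"
  "continuous_on S (\<lambda>x::(nat \<Rightarrow> real) \<times> (nat \<Rightarrow> real). slack_z' t (fst x) (snd x) i)"
  by (cases "i = 0"; simp add: slack_z_def slack_h_def slack_z'_def; intro continuous_intros)+

lemma compact_box: "compact (Pi UNIV (\<lambda>i. if i \<le> r then {0..R} else {0::real}))"
proof -
  have "compactin (product_topology (\<lambda>i. euclidean) UNIV) (PiE UNIV (\<lambda>i. if i \<le> r then {0..R} else {0::real}))"
    by (simp add: compactin_PiE)
  then show ?thesis by (simp add: euclidean_product_topology PiE_UNIV_domain)
qed

lemma closed_away_from_boundary:
  "closed {x::(nat \<Rightarrow> real) \<times> (nat \<Rightarrow> real). \<forall>i\<le>r. \<not> near_boundary r t \<delta> (fst x) (snd x) i}"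
proof -
  have "closed {x::(nat \<Rightarrow> real) \<times> (nat \<Rightarrow> real). \<delta> \<le> g x}" if "continuous_on UNIV g" for g
    by (rule closed_Collect_le[OF continuous_on_const that])
  then have "closed {x::(nat \<Rightarrow> real) \<times> (nat \<Rightarrow> real). i \<le> r \<longrightarrow> \<delta> \<le> fst x i \<and> \<delta> \<le> snd x i \<and>
     \<delta> \<le> slack_z t (fst x) i \<and> \<delta> \<le> slack_h t (fst x) (snd x) i \<and> (1 \<le> i \<longrightarrow> \<delta> \<le> slack_z' t (fst x) (snd x) i)}"
    for i by (cases "i \<le> r"; cases "1 \<le> i") (simp_all add: closed_Collect_conj continuous_intros)
  moreover have "{x::(nat \<Rightarrow> real) \<times> (nat \<Rightarrow> real). \<forall>i\<le>r. \<not> near_boundary r t \<delta> (fst x) (snd x) i}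
    = {x. \<forall>i. i \<le> r \<longrightarrow> \<delta> \<le> fst x i \<and> \<delta> \<le> snd x i \<and> \<delta> \<le> slack_z t (fst x) i \<and>
          \<delta> \<le> slack_h t (fst x) (snd x) i \<and> (1 \<le> i \<longrightarrow> \<delta> \<le> slack_z' t (fst x) (snd x) i)}"
    by (auto simp: near_boundary_def not_less)
  ultimately show ?thesis by (simp add: closed_Collect_all)
qed

lemma barrier_continuous_on:
  assumes feas: "\<And>x. x \<in> K \<Longrightarrow> strictly_feasible r t (fst x) (snd x)" and mu: "mu > 0"
  shows "continuous_on K (\<lambda>x. barrier r t mu (fst x) (snd x))"
  unfolding barrier_def log_barrier_term_def
proof (intro continuous_intros ballI)
  fix i x assume "i \<in> {0..r}" "x \<in> K"
  note pos = strictly_feasibleD[OF feas[OF \<open>x \<in> K\<close>], of i]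
  show "fst x i \<noteq> 0" "snd x i \<noteq> 0" "slack_z t (fst x) i \<noteq> 0" "slack_h t (fst x) (snd x) i \<noteq> 0"
    using pos \<open>i \<in> {0..r}\<close> by auto
next
  fix i assume "i \<in> {0..r}"
  show "continuous_on K (\<lambda>x. if i = 0 then 0 else ln (slack_z' t (fst x) (snd x) i))"
  proof (cases "i = 0")
    case False
    have "\<forall>x\<in>K. slack_z' t (fst x) (snd x) i \<noteq> 0" using strictly_feasibleD[OF feas] \<open>i \<in> {0..r}\<close> False by fastforce
    then show ?thesis using False by (simp, intro continuous_intros) auto
  qed simp
qed (use mu in simp)

text \<open>Existence of a minimizer: points near the boundary are worse than the witness point,
  and the remaining points, truncated, form a compact set on which the barrier is continuous.\<close>

lemma barrier_has_minimizer:
  assumes t: "t \<ge> 1" and mu: "mu > 0"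
  shows "\<exists>u v. strictly_feasible r t u v \<and>
           (\<forall>u' v'. strictly_feasible r t u' v' \<longrightarrow> barrier r t mu u v \<le> barrier r t mu u' v')"
proof -
  define p1 where "p1 = witness_u t mu"
  define p2 where "p2 = witness_v t mu"
  have fp: "strictly_feasible r t p1 p2" unfolding p1_def p2_def using witness_strictly_feasible t mu by simp
  define \<delta> where "\<delta> = exp (- (barrier r t mu p1 p2 + (5 * real r + 4) * ln (box_radius r t) + 1))"
  have d0: "\<delta> > 0" unfolding \<delta>_def by simp
  have far: "barrier r t mu u v \<ge> barrier r t mu p1 p2 + 1"
    if "strictly_feasible r t u v" "k \<le> r" "near_boundary r t \<delta> u v k" for u v k
    using barrier_near_boundary[OF t mu that(1,2) d0 that(3)] unfolding \<delta>_def by simp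
  define A where "A = (\<lambda>i. if i \<le> r then {0..box_radius r t} else {0::real})"
  define K where "K = (Pi UNIV A \<times> Pi UNIV A) \<inter>
    {x. \<forall>i\<le>r. \<not> near_boundary r t \<delta> (fst x) (snd x) i}"
  have K_compact: "compact K"
    unfolding K_def A_def by (intro compact_Int_closed compact_Times compact_box closed_away_from_boundary)
  have in_K: "(truncate r u, truncate r v) \<in> K"
    if "strictly_feasible r t u v" "\<forall>i\<le>r. \<not> near_boundary r t \<delta> u v i" for u v
    using that truncate_near_boundary strictly_feasible_bounded[OF t that(1)] strictly_feasibleD[OF that(1)]
    unfolding K_def A_def truncate_def by (auto simp: less_imp_le)
  have K_feasible: "strictly_feasible r t (fst x) (snd x)" if "x \<in> K" for x
    using that d0 unfolding K_def strictly_feasible_def near_boundary_def by (force simp: not_less)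
  have p_in_K: "(truncate r p1, truncate r p2) \<in> K" using in_K[OF fp] far[OF fp] by fastforce
  obtain x where x: "x \<in> K" "\<forall>y\<in>K. barrier r t mu (fst x) (snd x) \<le> barrier r t mu (fst y) (snd y)"
    using continuous_attains_inf[OF K_compact _ barrier_continuous_on[OF K_feasible mu]] p_in_K by blast
  have "barrier r t mu (fst x) (snd x) \<le> barrier r t mu u' v'" if feas': "strictly_feasible r t u' v'" for u' v'
  proof (cases "\<exists>k\<le>r. near_boundary r t \<delta> u' v' k")
    case True
    then have "barrier r t mu u' v' \<ge> barrier r t mu p1 p2 + 1" using far feas' by blast
    moreover have "barrier r t mu (fst x) (snd x) \<le> barrier r t mu p1 p2"
      using x(2) p_in_K truncate_barrier by fastforce
    ultimately show ?thesis by simp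
  next
    case False
    then show ?thesis using x(2) in_K[OF feas'] truncate_barrier by fastforce
  qed
  then show ?thesis using K_feasible[OF x(1)] by blast
qed

text \<open>Moving (u, v) along a direction (du, dv): the slacks move along their linear parts.\<close>

definition shift :: "(nat \<Rightarrow> real) \<Rightarrow> (nat \<Rightarrow> real) \<Rightarrow> real \<Rightarrow> nat \<Rightarrow> real" where
  "shift u du e i = u i + e * du i"

definition dslack_z :: "real \<Rightarrow> (nat \<Rightarrow> real) \<Rightarrow> nat \<Rightarrow> real" where
  "dslack_z t du i = (if i = 0 then - du 0 else t * du (i - 1) - du i)"
definition dslack_h :: "real \<Rightarrow> (nat \<Rightarrow> real) \<Rightarrow> (nat \<Rightarrow> real) \<Rightarrow> nat \<Rightarrow> real" where
  "dslack_h t du dv i = (if i = 0 then - dv 0 else coef t i * (du (i - 1) + dv (i - 1)) - dv i)"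
definition dslack_z' :: "real \<Rightarrow> (nat \<Rightarrow> real) \<Rightarrow> (nat \<Rightarrow> real) \<Rightarrow> nat \<Rightarrow> real" where
  "dslack_z' t du dv i = t * dv (i - 1) - du i"

lemma shift_slacks:
  "slack_z t (shift u du e) i = slack_z t u i + e * dslack_z t du i"
  "slack_h t (shift u du e) (shift v dv e) i = slack_h t u v i + e * dslack_h t du dv i"
  "slack_z' t (shift u du e) (shift v dv e) i = slack_z' t u v i + e * dslack_z' t du dv i"
  by (simp_all add: slack_z_def dslack_z_def slack_h_def dslack_h_def slack_z'_def dslack_z'_def
      shift_def algebra_simps)

lemma eventually_affine_pos: "a > 0 \<Longrightarrow> \<forall>\<^sub>F e in nhds (0::real). a + e * b > 0"
proof -
  assume "a > 0"
  have "((\<lambda>e. a + e * b) \<longlongrightarrow> a + 0 * b) (nhds 0)" by (intro tendsto_intros filterlim_ident)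
  then show ?thesis using order_tendstoD(1)[of _ a] \<open>a > 0\<close> by simp
qed

lemma strictly_feasible_shift:
  assumes feas: "strictly_feasible r t u v"
  shows "\<forall>\<^sub>F e in nhds 0. strictly_feasible r t (shift u du e) (shift v dv e)"
proof -
  have "\<forall>\<^sub>F e in nhds 0. \<forall>i\<in>{..r}. 0 < u i + e * du i \<and> 0 < v i + e * dv i \<and>
      0 < slack_z t u i + e * dslack_z t du i \<and> 0 < slack_h t u v i + e * dslack_h t du dv i \<and>
      (1 \<le> i \<longrightarrow> 0 < slack_z' t u v i + e * dslack_z' t du dv i)"
  proof (rule eventually_ball_finite, simp, rule ballI)
    fix i assume "i \<in> {..r}"
    then have pos: "u i > 0" "v i > 0" "slack_z t u i > 0" "slack_h t u v i > 0"
      "1 \<le> i \<Longrightarrow> slack_z' t u v i > 0" using strictly_feasibleD[OF feas, of i] by auto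
    have "\<forall>\<^sub>F e in nhds 0. 1 \<le> i \<longrightarrow> 0 < slack_z' t u v i + e * dslack_z' t du dv i"
      by (cases "1 \<le> i") (use pos in \<open>auto intro: eventually_affine_pos\<close>)
    then show "\<forall>\<^sub>F e in nhds 0. 0 < u i + e * du i \<and> 0 < v i + e * dv i \<and>
      0 < slack_z t u i + e * dslack_z t du i \<and> 0 < slack_h t u v i + e * dslack_h t du dv i \<and>
      (1 \<le> i \<longrightarrow> 0 < slack_z' t u v i + e * dslack_z' t du dv i)"
      using pos by (intro eventually_conj eventually_affine_pos) auto
  qed
  then show ?thesis unfolding strictly_feasible_def shift_slacks by (simp add: shift_def Ball_def atMost_iff)
qed

lemma has_derivative_ln_affine: "a > 0 \<Longrightarrow> ((\<lambda>e. ln (a + e * b)) has_real_derivative b / a) (at 0)"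
  by (auto intro!: derivative_eq_intros simp: field_simps)

lemma barrier_directional_derivative:
  assumes feas: "strictly_feasible r t u v" and mu: "mu > 0"
  shows "((\<lambda>e. barrier r t mu (shift u du e) (shift v dv e)) has_real_derivative
     (dv 0 / mu - (\<Sum>i=0..r. du i / u i + dv i / v i + dslack_z t du i / slack_z t u i
        + dslack_h t du dv i / slack_h t u v i
        + (if i = 0 then 0 else dslack_z' t du dv i / slack_z' t u v i)))) (at 0)"
proof -
  have eq: "(\<lambda>e. barrier r t mu (shift u du e) (shift v dv e)) = (\<lambda>e. (v 0 + e * dv 0) / mu - (\<Sum>i=0..r.
      ln (u i + e * du i) + ln (v i + e * dv i) + ln (slack_z t u i + e * dslack_z t du i)
      + ln (slack_h t u v i + e * dslack_h t du dv i)
      + (if i = 0 then 0 else ln (slack_z' t u v i + e * dslack_z' t du dv i))))"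
    unfolding barrier_def log_barrier_term_def shift_slacks by (simp add: shift_def)
  show ?thesis unfolding eq
  proof (intro DERIV_diff DERIV_sum DERIV_add)
    show "((\<lambda>e. (v 0 + e * dv 0) / mu) has_real_derivative dv 0 / mu) (at 0)"
      using mu by (auto intro!: derivative_eq_intros)
    fix i assume i: "i \<in> {0..r}"
    note pos = strictly_feasibleD[OF feas, of i]
    show "((\<lambda>e. ln (u i + e * du i)) has_real_derivative du i / u i) (at 0)"
      "((\<lambda>e. ln (v i + e * dv i)) has_real_derivative dv i / v i) (at 0)"
      "((\<lambda>e. ln (slack_z t u i + e * dslack_z t du i)) has_real_derivative
          dslack_z t du i / slack_z t u i) (at 0)"
      "((\<lambda>e. ln (slack_h t u v i + e * dslack_h t du dv i)) has_real_derivative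
          dslack_h t du dv i / slack_h t u v i) (at 0)"
      using pos i by (auto intro: has_derivative_ln_affine)
    show "((\<lambda>e. if i = 0 then 0 else ln (slack_z' t u v i + e * dslack_z' t du dv i)) has_real_derivative
        (if i = 0 then 0 else dslack_z' t du dv i / slack_z' t u v i)) (at 0)"
      using pos i by (cases "i = 0") (auto intro: has_derivative_ln_affine)
  qed
qed

lemma barrier_stationary:
  assumes feas: "strictly_feasible r t u v" and mu: "mu > 0"
    and min: "\<forall>u' v'. strictly_feasible r t u' v' \<longrightarrow> barrier r t mu u v \<le> barrier r t mu u' v'"
  shows "dv 0 / mu - (\<Sum>i=0..r. du i / u i + dv i / v i + dslack_z t du i / slack_z t u i
        + dslack_h t du dv i / slack_h t u v i
        + (if i = 0 then 0 else dslack_z' t du dv i / slack_z' t u v i)) = 0"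
proof -
  obtain d where d: "d > 0" "\<forall>e. dist e 0 < d \<longrightarrow> strictly_feasible r t (shift u du e) (shift v dv e)"
    using strictly_feasible_shift[OF feas, of du dv] unfolding eventually_nhds_metric by blast
  have "shift u du 0 = u" "shift v dv 0 = v" by (simp_all add: shift_def fun_eq_iff)
  then show ?thesis
    using d min by (intro DERIV_local_min[OF barrier_directional_derivative[OF feas mu] d(1)])
      (auto simp: dist_real_def)
qed

text \<open>The directions e_j in u and in v give the dual equations for s_u and s_v, with the
  dual variables taken as mu divided by the primal coordinates.\<close>

lemma stationary_u:
  assumes feas: "strictly_feasible r t u v" and mu: "mu > 0"
    and min: "\<forall>u' v'. strictly_feasible r t u' v' \<longrightarrow> barrier r t mu u v \<le> barrier r t mu u' v'"
    and j: "j \<le> r"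
  shows "1 / u j = 1 / slack_z t u j + (if j = 0 then 0 else 1 / slack_z' t u v j)
     - (if j < r then t / slack_z t u (Suc j) + coef t (Suc j) / slack_h t u v (Suc j) else 0)"
proof -
  define du where "du = (\<lambda>i. if i = j then 1 else (0::real))"
  define dv where "dv = (\<lambda>i::nat. (0::real))"
  have summand: "du i / u i + dv i / v i + dslack_z t du i / slack_z t u i + dslack_h t du dv i / slack_h t u v i
        + (if i = 0 then 0 else dslack_z' t du dv i / slack_z' t u v i)
      = (if i = j then 1 / u i - 1 / slack_z t u i - (if i = 0 then 0 else 1 / slack_z' t u v i) else 0)
        + (if i = Suc j then t / slack_z t u i + coef t i / slack_h t u v i else 0)" for i
    by (cases "i = 0"; cases "i = j"; cases "i = Suc j")
      (auto simp: du_def dv_def dslack_z_def dslack_h_def dslack_z'_def)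
  have "0 = (\<Sum>i=0..r. (if i = j then 1 / u i - 1 / slack_z t u i - (if i = 0 then 0 else 1 / slack_z' t u v i) else 0))
       + (\<Sum>i=0..r. (if i = Suc j then t / slack_z t u i + coef t i / slack_h t u v i else 0))"
    using barrier_stationary[OF feas mu min, of dv du] unfolding summand sum.distrib by (simp add: dv_def)
  also have "\<dots> = 1 / u j - 1 / slack_z t u j - (if j = 0 then 0 else 1 / slack_z' t u v j)
     + (if j < r then t / slack_z t u (Suc j) + coef t (Suc j) / slack_h t u v (Suc j) else 0)"
    using j by (simp add: sum.delta)
  finally show ?thesis by simp
qed

lemma stationary_v:
  assumes feas: "strictly_feasible r t u v" and mu: "mu > 0"
    and min: "\<forall>u' v'. strictly_feasible r t u' v' \<longrightarrow> barrier r t mu u v \<le> barrier r t mu u' v'"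
    and j: "j \<le> r"
  shows "1 / v j = (if j = 0 then 1 / mu else 0) + 1 / slack_h t u v j
     - (if j < r then coef t (Suc j) / slack_h t u v (Suc j) + t / slack_z' t u v (Suc j) else 0)"
proof -
  define dv where "dv = (\<lambda>i. if i = j then 1 else (0::real))"
  define du where "du = (\<lambda>i::nat. (0::real))"
  have summand: "du i / u i + dv i / v i + dslack_z t du i / slack_z t u i + dslack_h t du dv i / slack_h t u v i
        + (if i = 0 then 0 else dslack_z' t du dv i / slack_z' t u v i)
      = (if i = j then 1 / v i - 1 / slack_h t u v i else 0)
        + (if i = Suc j then coef t i / slack_h t u v i + t / slack_z' t u v i else 0)" for i
    by (cases "i = 0"; cases "i = j"; cases "i = Suc j")
      (auto simp: du_def dv_def dslack_z_def dslack_h_def dslack_z'_def)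
  have "(if j = 0 then 1 else 0) / mu
      = (\<Sum>i=0..r. (if i = j then 1 / v i - 1 / slack_h t u v i else 0))
       + (\<Sum>i=0..r. (if i = Suc j then coef t i / slack_h t u v i + t / slack_z' t u v i else 0))"
    using barrier_stationary[OF feas mu min, of dv du] unfolding summand sum.distrib by (simp add: dv_def)
  also have "\<dots> = 1 / v j - 1 / slack_h t u v j
     + (if j < r then coef t (Suc j) / slack_h t u v (Suc j) + t / slack_z' t u v (Suc j) else 0)"
    using j by (simp add: sum.delta)
  finally show ?thesis by (cases "j = 0") simp_all
qed

definition central_point :: "nat \<Rightarrow> real \<Rightarrow> real \<Rightarrow> (nat \<Rightarrow> real) \<Rightarrow> (nat \<Rightarrow> real) \<Rightarrow> bool" where
  "central_point r t mu u v \<longleftrightarrow>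
     cp_system r t mu u v (slack_z t u) (slack_z' t u v) (slack_h t u v) (\<lambda>i. mu / slack_z t u i)
       (\<lambda>i. mu / slack_z' t u v i) (\<lambda>i. mu / slack_h t u v i) (\<lambda>i. mu / u i) (\<lambda>i. mu / v i)"

text \<open>The minimizer of the barrier is a central point.\<close>

lemma central_point_exists:
  assumes t: "t \<ge> 1" and mu: "mu > 0"
  shows "\<exists>u v. central_point r t mu u v"
proof -
  obtain u v where feas: "strictly_feasible r t u v"
    and min: "\<forall>u' v'. strictly_feasible r t u' v' \<longrightarrow> barrier r t mu u v \<le> barrier r t mu u' v'"
    using barrier_has_minimizer[OF t mu] by blast
  have su: "mu / u i = (if i = 0 then mu / slack_z t u 0 else mu / slack_z t u i + mu / slack_z' t u v i)
      - (if i < r then t * (mu / slack_z t u (i + 1)) + coef t (i + 1) * (mu / slack_h t u v (i + 1)) else 0)"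
    if "i \<le> r" for i
    using arg_cong[OF stationary_u[OF feas mu min that], of "(*) mu"]
    by (cases "i = 0"; cases "i < r") (simp_all add: algebra_simps)
  have sv: "mu / v i = (if i = 0 then 1 else 0) + mu / slack_h t u v i
      - (if i < r then t * (mu / slack_z' t u v (i + 1)) + coef t (i + 1) * (mu / slack_h t u v (i + 1)) else 0)"
    if "i \<le> r" for i
    using arg_cong[OF stationary_v[OF feas mu min that], of "(*) mu"] mu
    by (cases "i = 0"; cases "i < r") (simp_all add: algebra_simps)
  have "central_point r t mu u v"
    unfolding central_point_def cp_system_def
  proof (intro conjI ballI)
    show "u 0 + slack_z t u 0 = t" "v 0 + slack_h t u v 0 = t ^ 2" by (simp_all add: slack_z_def slack_h_def)
    fix i assume i: "i \<in> {1..r}"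
    then show "u i + slack_z t u i = t * u (i - 1)" "u i + slack_z' t u v i = t * v (i - 1)"
      "v i + slack_h t u v i = coef t i * (u (i - 1) + v (i - 1))"
      by (simp_all add: slack_z_def slack_h_def slack_z'_def)
    show "slack_z' t u v i * (mu / slack_z' t u v i) = mu" "slack_z' t u v i > 0" "mu / slack_z' t u v i > 0"
      using strictly_feasibleD[OF feas, of i] i mu by auto
  next
    fix i assume i: "i \<in> {0..r}"
    then show "mu / u i = (if i = 0 then mu / slack_z t u 0 else mu / slack_z t u i + mu / slack_z' t u v i)
      - (if i < r then t * (mu / slack_z t u (i + 1)) + coef t (i + 1) * (mu / slack_h t u v (i + 1)) else 0)"
      "mu / v i = (if i = 0 then 1 else 0) + mu / slack_h t u v i
      - (if i < r then t * (mu / slack_z' t u v (i + 1)) + coef t (i + 1) * (mu / slack_h t u v (i + 1)) else 0)"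
      using su sv by auto
    have "u i > 0" "v i > 0" "slack_z t u i > 0" "slack_h t u v i > 0"
      using strictly_feasibleD[OF feas, of i] i by auto
    then show "slack_z t u i * (mu / slack_z t u i) = mu" "slack_h t u v i * (mu / slack_h t u v i) = mu"
      "u i * (mu / u i) = mu" "v i * (mu / v i) = mu" "u i > 0" "v i > 0" "slack_z t u i > 0" "slack_h t u v i > 0"
      "mu / slack_z t u i > 0" "mu / slack_h t u v i > 0" "mu / u i > 0" "mu / v i > 0"
      using mu by auto
  qed
  then show ?thesis by blast
qed

section \<open>The central path of LP_r and its valuation\<close>

text \<open>The central point, chosen for every t and mu; it exists for t >= 1 and mu > 0.\<close>

definition central_u :: "nat \<Rightarrow> real \<Rightarrow> real \<Rightarrow> nat \<Rightarrow> real" where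
  "central_u r t mu = fst (SOME p. central_point r t mu (fst p) (snd p))"

definition central_v :: "nat \<Rightarrow> real \<Rightarrow> real \<Rightarrow> nat \<Rightarrow> real" where
  "central_v r t mu = snd (SOME p. central_point r t mu (fst p) (snd p))"

lemma central_point_central_uv:
  assumes "t \<ge> 1" "mu > 0"
  shows "central_point r t mu (central_u r t mu) (central_v r t mu)"
proof -
  have "\<exists>p. central_point r t mu (fst p) (snd p)" using central_point_exists[OF assms] by auto
  from someI_ex[OF this] show ?thesis unfolding central_u_def central_v_def .
qed

lemma cp_primal_central_uv:
  fixes r :: nat and t mu :: real
  assumes t: "t \<ge> 1" and mu: "mu > 0"
  defines "U \<equiv> central_u r t mu" and "V \<equiv> central_v r t mu"
  shows "cp_primal r t mu U V (slack_z t U) (slack_z' t U V) (slack_h t U V) \<and>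
    (\<forall>u v z z' h. cp_primal r t mu u v z z' h \<longrightarrow>
       (\<forall>i\<in>{0..r}. u i = U i \<and> v i = V i \<and> z i = slack_z t U i \<and> h i = slack_h t U V i) \<and>
       (\<forall>i\<in>{1..r}. z' i = slack_z' t U V i))"
proof (intro conjI allI impI)
  have cpUV: "central_point r t mu U V" unfolding U_def V_def by (rule central_point_central_uv[OF t mu])
  then show "cp_primal r t mu U V (slack_z t U) (slack_z' t U V) (slack_h t U V)"
    unfolding central_point_def cp_primal_def by blast
  fix u v z z' h assume "cp_primal r t mu u v z z' h"
  then obtain ya ya' yb su sv where cp: "cp_system r t mu u v z z' h ya ya' yb su sv"
    unfolding cp_primal_def by blast
  note cpUV' = cpUV[unfolded central_point_def]
  have same: "u i = U i \<and> v i = V i" if "i \<le> r" for i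
    using central_primal_unique[OF cp cpUV' mu] that by simp
  show "\<forall>i\<in>{0..r}. u i = U i \<and> v i = V i \<and> z i = slack_z t U i \<and> h i = slack_h t U V i"
    using cp_system_facts(1)[OF cp mu] same by (auto simp: slack_z_def slack_h_def)
  show "\<forall>i\<in>{1..r}. z' i = slack_z' t U V i"
    using cp_system_facts(2)[OF cp mu] same by (auto simp: slack_z'_def)
qed

lemma central_point_scale_bounds:
  assumes cp: "central_point r t mu u v" and mu: "mu > 0" and t: "t > 0" and i: "i \<le> r"
  defines "c \<equiv> lower_const r" and "N \<equiv> upper_const r"
  shows "c * scale_u t mu i \<le> u i \<and> u i \<le> N * scale_u t mu i"
    "c * scale_v t mu i \<le> v i \<and> v i \<le> N * scale_v t mu i"
    "c * scale_z t mu i \<le> slack_z t u i \<and> slack_z t u i \<le> N * scale_z t mu i"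
    "c * scale_h t mu i \<le> slack_h t u v i \<and> slack_h t u v i \<le> N * scale_h t mu i"
    "i \<ge> 1 \<Longrightarrow> c * scale_z' t mu i \<le> slack_z' t u v i \<and> slack_z' t u v i \<le> N * scale_z' t mu i"
  using central_lower_bound[OF cp[unfolded central_point_def] mu t i]
    central_upper_bound[OF cp[unfolded central_point_def] mu t i]
    central_slack_upper_bound[OF cp[unfolded central_point_def] mu t i]
  unfolding c_def N_def by auto

lemma central_path_valuations:
  fixes r i :: nat and lam :: real
  defines "U \<equiv> \<lambda>t. central_u r t (t powr lam)" and "V \<equiv> \<lambda>t. central_v r t (t powr lam)"
  assumes i: "i \<le> r"
  shows "has_val (\<lambda>t. U t i) (u_trop lam i)" "has_val (\<lambda>t. V t i) (v_trop lam i)"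
    "has_val (\<lambda>t. slack_z t (U t) i) (z_trop lam i)" "has_val (\<lambda>t. slack_h t (U t) (V t) i) (h_trop lam i)"
    "i \<ge> 1 \<Longrightarrow> has_val (\<lambda>t. slack_z' t (U t) (V t) i) (z'_trop lam i)"
proof -
  have squeeze: "has_val F a"
    if G: "has_val G a" and bounds: "\<And>t. t \<ge> 1 \<Longrightarrow> central_point r t (t powr lam) (U t) (V t) \<Longrightarrow>
        G t > 0 \<and> lower_const r * G t \<le> F t \<and> F t \<le> upper_const r * G t" for F G a
  proof (rule has_val_squeeze[OF G consts_pos(2)])
    show "upper_const r > 0" using consts_pos(1)[of r] by simp
    show "\<forall>\<^sub>F t in at_top. G t > 0 \<and> lower_const r * G t \<le> F t \<and> F t \<le> upper_const r * G t"
      using eventually_ge_at_top[of 1]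
      by eventually_elim (use bounds central_point_central_uv in \<open>auto simp: U_def V_def\<close>)
  qed
  note bounds = central_point_scale_bounds[OF _ _ _ i] and pos = scale_pos scale_slack_pos
  show "has_val (\<lambda>t. U t i) (u_trop lam i)"
    by (rule squeeze[OF scale_val[THEN conjunct1]]) (use bounds(1) pos in auto)
  show "has_val (\<lambda>t. V t i) (v_trop lam i)"
    by (rule squeeze[OF scale_val[THEN conjunct2]]) (use bounds(2) pos in auto)
  show "has_val (\<lambda>t. slack_z t (U t) i) (z_trop lam i)"
    by (rule squeeze[OF scale_slack_val(1)]) (use bounds(3) pos in auto)
  show "has_val (\<lambda>t. slack_h t (U t) (V t) i) (h_trop lam i)"
    by (rule squeeze[OF scale_slack_val(2)]) (use bounds(4) pos in auto)
  show "has_val (\<lambda>t. slack_z' t (U t) (V t) i) (z'_trop lam i)" if "i \<ge> 1"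
    by (rule squeeze[OF scale_slack_val(3)]) (use bounds(5)[OF _ _ _ that] pos in auto)
qed

text \<open>The main theorem: the primal part of the central point with mu = t^lambda is
  eventually unique, and its valuation is the tropical central path.\<close>

theorem mainTheorem13:
  fixes r :: nat and lam :: real
  assumes "r \<ge> 1"
  shows "\<exists>U V Z Z' H :: real \<Rightarrow> nat \<Rightarrow> real.
     (\<forall>\<^sub>F t in at_top.
        cp_primal r t (t powr lam) (U t) (V t) (Z t) (Z' t) (H t) \<and>
        (\<forall>u v z z' h. cp_primal r t (t powr lam) u v z z' h \<longrightarrow>
           (\<forall>i\<in>{0..r}. u i = U t i \<and> v i = V t i \<and> z i = Z t i \<and> h i = H t i) \<and>
           (\<forall>i\<in>{1..r}. z' i = Z' t i))) \<and>
     (\<forall>i\<in>{0..r}. has_val (\<lambda>t. U t i) (u_trop lam i) \<and> has_val (\<lambda>t. V t i) (v_trop lam i) \<and>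
                  has_val (\<lambda>t. Z t i) (z_trop lam i) \<and> has_val (\<lambda>t. H t i) (h_trop lam i)) \<and>
     (\<forall>i\<in>{1..r}. has_val (\<lambda>t. Z' t i) (z'_trop lam i))"
proof -
  define U where "U = (\<lambda>t. central_u r t (t powr lam))"
  define V where "V = (\<lambda>t. central_v r t (t powr lam))"
  have "\<forall>\<^sub>F t in at_top.
        cp_primal r t (t powr lam) (U t) (V t) (slack_z t (U t)) (slack_z' t (U t) (V t)) (slack_h t (U t) (V t)) \<and>
        (\<forall>u v z z' h. cp_primal r t (t powr lam) u v z z' h \<longrightarrow>
           (\<forall>i\<in>{0..r}. u i = U t i \<and> v i = V t i \<and> z i = slack_z t (U t) i \<and> h i = slack_h t (U t) (V t) i) \<and>
           (\<forall>i\<in>{1..r}. z' i = slack_z' t (U t) (V t) i))"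
    using eventually_ge_at_top[of 1]
    by eventually_elim (unfold U_def V_def, rule cp_primal_central_uv, auto)
  moreover have "\<forall>i\<in>{0..r}. has_val (\<lambda>t. U t i) (u_trop lam i) \<and> has_val (\<lambda>t. V t i) (v_trop lam i) \<and>
      has_val (\<lambda>t. slack_z t (U t) i) (z_trop lam i) \<and> has_val (\<lambda>t. slack_h t (U t) (V t) i) (h_trop lam i)"
    unfolding U_def V_def using central_path_valuations(1-4) by simp
  moreover have "\<forall>i\<in>{1..r}. has_val (\<lambda>t. slack_z' t (U t) (V t) i) (z'_trop lam i)"
    unfolding U_def V_def using central_path_valuations(5) by simp
  ultimately show ?thesis
    by (intro exI[of _ U] exI[of _ V] exI[of _ "\<lambda>t. slack_z t (U t)"]
        exI[of _ "\<lambda>t. slack_z' t (U t) (V t)"] exI[of _ "\<lambda>t. slack_h t (U t) (V t)"] conjI)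
qed
end
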